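(* Let $f:\mathbb{R}^{d_1}\times\mathbb{R}^{d_2}\to\mathbb{R}$ satisfy: (i) for every fixed $x$, $\max_y f(x,y)$ has a nonempty solution set and a finite optimal value, and there is $\mu>0$ with $\|\nabla_y f(x,y)\|^2\geq 2\mu[\max_{y'}f(x,y')-f(x,y)]$ for all $x,y$; (ii) there is $l>0$ with $\|\nabla_x f(x_1,y_1)-\nabla_x f(x_2,y_2)\|\leq l[\|x_1-x_2\|+\|y_1-y_2\|]$ and $\|\nabla_y f(x_1,y_1)-\nabla_y f(x_2,y_2)\|\leq l[\|x_1-x_2\|+\|y_1-y_2\|]$ for all $x_1,x_2,y_1,y_2$. Let $\Phi(x)=\max_y f(x,y)$ and suppose $\Phi^*=\min_x\Phi(x)$ exists and is finite. Let $\kappa=l/\mu$, $L=l+\frac{l^2}{2\mu}$. Let $\epsilon>0$, $\beta\leq\frac{1}{4d_2L}$, $\alpha\leq\min\{\frac{\beta}{32\kappa^2},\frac{1}{10d_1L}\}$, $\theta_1=\left(5d_1L+\frac{3}{2\alpha}+\frac32L+d_2L\right)d_1^2L^2\alpha^2$, $\mu_1=\frac{\sqrt{\alpha}\,\epsilon}{2\sqrt{\theta_1}}$, $\mu_2=\frac{\sqrt{\alpha}\,\epsilon}{\sqrt{3\beta}\,d_2L}$. Let $(x_t,y_t)_{t\geq0}$ be generated by the ZO-AGDA iteration described in the context from initial point $(x_0,y_0)$, and let $T(\epsilon)=\min\{t:\mathbb{E}\|\nabla\Phi(x_t)\|\leq\epsilon\}$. Then $$T(\epsilon)\leq\frac{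4[3\Phi(x_0)-f(x_0,y_0)-2\Phi^*]}{\alpha\epsilon^2}.$$
   Context: ZO-AGDA iteration: given $(x_t,y_t)$, draw $u_t$ uniformly from the unit sphere in $\mathbb{R}^{d_1}$ and $v_t$ uniformly from the unit sphere in $\mathbb{R}^{d_2}$, independently of everything else, and set $x_{t+1}=x_t-\alpha\,\frac{f(x_t+\mu_1u_t,y_t)-f(x_t,y_t)}{\mu_1/d_1}u_t$, then $y_{t+1}=y_t+\beta\,\frac{f(x_{t+1},y_t+\mu_2v_t)-f(x_{t+1},y_t)}{\mu_2/d_2}v_t$. Expectations are over all random vectors drawn by the algorithm. An $\epsilon$-stationary point is $\hat x$ with $\mathbb{E}\|\nabla\Phi(\hat x)\|\leq\epsilon$. *)

theory Defs
  imports "HOL-Probability.Probability"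
begin

text \<open>Value function Phi(x) = max over y of f(x,y) (the max is assumed attained in the theorem).\<close>
definition Phi :: "('a \<Rightarrow> 'b \<Rightarrow> real) \<Rightarrow> 'a \<Rightarrow> real" where
  "Phi f x = (SUP y. f x y)"

definition grad :: "('a::real_inner \<Rightarrow> real) \<Rightarrow> 'a \<Rightarrow> 'a" where
  "grad g x = (THE D. (g has_derivative (\<lambda>h. D \<bullet> h)) (at x))"

text \<open>Uniform distribution on the unit sphere: radial projection of the uniform
  distribution on the unit ball (i.e. normalized surface measure).\<close>
definition uniform_sphere :: "('a::euclidean_space) measure" where
  "uniform_sphere = distr (uniform_measure lborel (ball 0 1)) borel (\<lambda>x. x /\<^sub>R norm x)"

primrec zo_agda :: "('a::euclidean_space \<Rightarrow> 'b::euclidean_space \<Rightarrow> real) \<Rightarrow> real \<Rightarrow> real \<Rightarrow> real \<Rightarrow> real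
    \<Rightarrow> 'a \<Rightarrow> 'b \<Rightarrow> (nat \<Rightarrow> 'a) \<Rightarrow> (nat \<Rightarrow> 'b) \<Rightarrow> nat \<Rightarrow> 'a \<times> 'b" where
  "zo_agda f \<alpha> \<beta> \<mu>1 \<mu>2 x0 y0 u v 0 = (x0, y0)"
| "zo_agda f \<alpha> \<beta> \<mu>1 \<mu>2 x0 y0 u v (Suc t) =
     (let x = fst (zo_agda f \<alpha> \<beta> \<mu>1 \<mu>2 x0 y0 u v t);
          y = snd (zo_agda f \<alpha> \<beta> \<mu>1 \<mu>2 x0 y0 u v t);
          x' = x - (\<alpha> * ((f (x + \<mu>1 *\<^sub>R u t) y - f x y) / (\<mu>1 / real DIM('a)))) *\<^sub>R u t;
          y' = y + (\<beta> * ((f x' (y + \<mu>2 *\<^sub>R v t) - f x' y) / (\<mu>2 / real DIM('b)))) *\<^sub>R v t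
      in (x', y'))"

end

theory Submission
  imports Defs
begin

(* Track the potential V(x, y) = Phi(x) - Phi_min + (Phi(x) - f(x, y)) / 2.
   For u uniform on the unit sphere of R^d we have E[u u^T] = I / d, so in expectation the
   zeroth-order steps are gradient steps up to a bias of order l * mu_i.  The y-step then shrinks
   the gap Phi(x) - f(x, y) by the PL inequality, and the x-step is a descent step for Phi, which is
   smooth by Danskin's theorem; the error of using grad_x f(x, y) instead of grad Phi(x) is paid
   for by the gap.  Together, one iteration decreases E V by at least
   alpha * eps * E |grad Phi(x_t)| - 7/8 * alpha * eps^2.  Summed over T iterations with
   E |grad Phi(x_t)| > eps this gives T * alpha * eps^2 / 8 <= V(x0, y0), and
   8 V(x0, y0) = 4 (3 Phi(x0) - f(x0, y0) - 2 Phi_min). *)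

section \<open>Gradients and quadratic bounds\<close>

lemma grad_eqI:
  fixes g :: "'a::real_inner \<Rightarrow> real"
  assumes "(g has_derivative (\<lambda>h. D \<bullet> h)) (at x)"
  shows "grad g x = D"
proof -
  have "D' = D" if "(g has_derivative (\<lambda>h. D' \<bullet> h)) (at x)" for D'
  proof -
    have "(\<lambda>h. D' \<bullet> h) = (\<lambda>h. D \<bullet> h)" using has_derivative_unique[OF that assms] .
    then have "D' \<bullet> (D' - D) = D \<bullet> (D' - D)" by metis
    then have "(D' - D) \<bullet> (D' - D) = 0" by (simp add: inner_diff_left)
    then show ?thesis by simp
  qed
  with assms show ?thesis unfolding grad_def by (rule the_equality)
qed

lemma has_derivative_grad:
  fixes g :: "'a::euclidean_space \<Rightarrow> real"
  assumes "g differentiable (at x)"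
  shows "(g has_derivative (\<lambda>h. grad g x \<bullet> h)) (at x)"
proof -
  obtain g' where g': "(g has_derivative g') (at x)"
    using assms by (auto simp: differentiable_def)
  then have "linear g'" by (rule has_derivative_linear)
  define D where "D = (\<Sum>b\<in>Basis. g' b *\<^sub>R b)"
  have "g' h = D \<bullet> h" for h
  proof -
    have "g' h = g' (\<Sum>b\<in>Basis. (h \<bullet> b) *\<^sub>R b)" by (simp add: euclidean_representation)
    also have "\<dots> = (\<Sum>b\<in>Basis. (h \<bullet> b) * g' b)"
      using \<open>linear g'\<close> by (simp add: linear_sum linear_scale)
    also have "\<dots> = D \<bullet> h"
      by (simp add: D_def inner_sum_left inner_sum_right mult.commute inner_commute)
    finally show ?thesis .
  qed
  with g' have "(g has_derivative (\<lambda>h. D \<bullet> h)) (at x)" by (metis (no_types, lifting) ext)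
  then show ?thesis using grad_eqI by metis
qed

lemma has_real_derivative_along_line:
  fixes g :: "'a::real_inner \<Rightarrow> real"
  assumes "\<And>z. (g has_derivative (\<lambda>h. D z \<bullet> h)) (at z)"
  shows "((\<lambda>t. g (x + t *\<^sub>R d)) has_real_derivative (D (x + t *\<^sub>R d) \<bullet> d)) (at t)"
proof -
  have "((\<lambda>t. x + t *\<^sub>R d) has_derivative (\<lambda>s. s *\<^sub>R d)) (at t)"
    by (auto intro!: derivative_eq_intros)
  from diff_chain_at[OF this assms]
  have "((\<lambda>t. g (x + t *\<^sub>R d)) has_derivative (\<lambda>s. D (x + t *\<^sub>R d) \<bullet> (s *\<^sub>R d))) (at t)"
    by (simp add: o_def)
  then show ?thesis
    by (rule has_derivative_imp_has_field_derivative) (simp add: mult.commute)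
qed

lemma lipschitz_gradient_quadratic_bound:
  fixes g :: "'a::real_inner \<Rightarrow> real"
  assumes der: "\<And>z. (g has_derivative (\<lambda>h. D z \<bullet> h)) (at z)"
    and lip: "\<And>z w. norm (D z - D w) \<le> c * norm (z - w)"
  shows "\<bar>g (x + d) - g x - D x \<bullet> d\<bar> \<le> c / 2 * (norm d)\<^sup>2"
proof -
  have slope: "\<bar>D (x + t *\<^sub>R d) \<bullet> d - D x \<bullet> d\<bar> \<le> c * t * (norm d)\<^sup>2" if "0 \<le> t" for t
  proof -
    have "\<bar>D (x + t *\<^sub>R d) \<bullet> d - D x \<bullet> d\<bar> = \<bar>(D (x + t *\<^sub>R d) - D x) \<bullet> d\<bar>"
      by (simp add: inner_diff_left)
    also have "\<dots> \<le> norm (D (x + t *\<^sub>R d) - D x) * norm d"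
      by (rule Cauchy_Schwarz_ineq2)
    also have "\<dots> \<le> (c * norm (t *\<^sub>R d)) * norm d"
      using lip[of "x + t *\<^sub>R d" x] by (intro mult_right_mono) auto
    finally show ?thesis
      using that by (simp add: power2_eq_square mult.assoc)
  qed
  \<comment> \<open>the remainder plus (resp. minus) \<open>c t\<^sup>2 \<parallel>d\<parallel>\<^sup>2 / 2\<close> is monotone along the segment\<close>
  define r where "r t = g (x + t *\<^sub>R d) - t * (D x \<bullet> d)" for t
  have r': "(r has_real_derivative (D (x + t *\<^sub>R d) \<bullet> d - D x \<bullet> d)) (at t)" for t
    unfolding r_def[abs_def]
    by (rule derivative_eq_intros has_real_derivative_along_line[OF der] refl)+ simp
  define q where "q t = c / 2 * t\<^sup>2 * (norm d)\<^sup>2" for t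
  have q': "(q has_real_derivative (c * t * (norm d)\<^sup>2)) (at t)" for t
    unfolding q_def[abs_def] by (auto intro!: derivative_eq_intros)
  have "r 1 - q 1 \<le> r 0 - q 0"
  proof (rule DERIV_nonpos_imp_nonincreasing[where f = "\<lambda>t. r t - q t"])
    fix t :: real assume "0 \<le> t"
    then have "D (x + t *\<^sub>R d) \<bullet> d - D x \<bullet> d - c * t * (norm d)\<^sup>2 \<le> 0"
      using slope[OF \<open>0 \<le> t\<close>] by (simp add: abs_le_iff)
    with DERIV_diff[OF r' q']
    show "\<exists>y. ((\<lambda>t. r t - q t) has_real_derivative y) (at t) \<and> y \<le> 0" by blast
  qed simp
  moreover have "r 0 + q 0 \<le> r 1 + q 1"
  proof (rule DERIV_nonneg_imp_nondecreasing[where f = "\<lambda>t. r t + q t"])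
    fix t :: real assume "0 \<le> t"
    then have "0 \<le> D (x + t *\<^sub>R d) \<bullet> d - D x \<bullet> d + c * t * (norm d)\<^sup>2"
      using slope[OF \<open>0 \<le> t\<close>] by (simp add: abs_le_iff)
    with DERIV_add[OF r' q']
    show "\<exists>y. ((\<lambda>t. r t + q t) has_real_derivative y) (at t) \<and> 0 \<le> y" by blast
  qed simp
  ultimately show ?thesis
    unfolding abs_le_iff r_def q_def by simp
qed

lemma has_derivative_of_quadratic_remainder:
  fixes g :: "'a::real_inner \<Rightarrow> real"
  assumes "\<And>d. \<bar>g (x + d) - g x - D \<bullet> d\<bar> \<le> C * (norm d)\<^sup>2"
  shows "(g has_derivative (\<lambda>h. D \<bullet> h)) (at x)"
  unfolding has_derivative_at
proof (intro conjI)
  show "bounded_linear ((\<bullet>) D)" by (rule bounded_linear_inner_right)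
  have lim: "((\<lambda>h. C * norm h) \<longlongrightarrow> 0) (at (0::'a))"
    by (intro tendsto_mult_right_zero tendsto_norm_zero tendsto_ident_at)
  have "norm (norm (g (x + h) - g x - D \<bullet> h) / norm h) \<le> C * norm h" for h
  proof (cases "h = 0")
    case False
    then have "norm h > 0" by simp
    with assms[of h] show ?thesis by (simp add: divide_le_eq power2_eq_square mult.assoc)
  qed simp
  then show "(\<lambda>h. norm (g (x + h) - g x - D \<bullet> h) / norm h) \<midarrow>0\<rightarrow> 0"
    by (intro Lim_null_comparison[OF always_eventually lim] allI)
qed

lemma gradient_lipschitz_of_quadratic_remainder:
  fixes g :: "'a::real_inner \<Rightarrow> real"
  assumes quad: "\<And>x d. \<bar>g (x + d) - g x - D x \<bullet> d\<bar> \<le> C * (norm d)\<^sup>2"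
  shows "norm (D x - D z) \<le> 6 * C * norm (x - z)"
proof (cases "x = z")
  case True
  then show ?thesis by simp
next
  case False
  define w where "w = z - x"
  have "norm w > 0" using False unfolding w_def by simp
  moreover have "0 \<le> C * (norm w)\<^sup>2" using quad[of x w] by (rule order_trans[OF abs_ge_zero])
  ultimately have "0 \<le> C" by (simp add: zero_le_mult_iff)
  show ?thesis
  proof (cases "D x = D z")
    case True
    with \<open>0 \<le> C\<close> show ?thesis by simp
  next
    case False
    define v where "v = D x - D z"
    define d where "d = (norm w / norm v) *\<^sub>R v"
    have "norm v > 0" using False unfolding v_def by simp
    then have nd: "norm d = norm w" and vd: "v \<bullet> d = norm v * norm w"
      unfolding d_def by (simp_all add: power2_norm_eq_inner[symmetric] power2_eq_square)
    \<comment> \<open>compare the expansions of \<open>g (z + d)\<close> around \<open>x\<close> and around \<open>z\<close>\<close>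
    have zd: "x + (w + d) = z + d" and zw: "x + w = z" unfolding w_def by auto
    have "v \<bullet> d = D x \<bullet> (w + d) - D x \<bullet> w - D z \<bullet> d"
      unfolding v_def by (simp add: inner_diff_left inner_add_right)
    with quad[of x "w + d", unfolded zd] quad[of z d] quad[of x w, unfolded zw] vd
    have "norm v * norm w \<le> C * (norm (w + d))\<^sup>2 + C * (norm d)\<^sup>2 + C * (norm w)\<^sup>2"
      unfolding abs_le_iff by linarith
    moreover have "(norm (w + d))\<^sup>2 \<le> (norm w + norm d)\<^sup>2"
      by (intro power_mono norm_triangle_ineq) auto
    then have "C * (norm (w + d))\<^sup>2 \<le> C * (4 * (norm w)\<^sup>2)"
      using nd \<open>0 \<le> C\<close> by (intro mult_left_mono) (auto simp: power2_eq_square)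
    ultimately have "norm v * norm w \<le> (6 * C * norm w) * norm w"
      using nd by (simp add: power2_eq_square)
    with \<open>norm w > 0\<close> show ?thesis unfolding v_def w_def by (simp add: norm_minus_commute)
  qed
qed

lemma difference_quotient_error:
  fixes g :: "'a::real_inner \<Rightarrow> real"
  assumes quad: "\<bar>g (x + r *\<^sub>R u) - g x - D \<bullet> (r *\<^sub>R u)\<bar> \<le> c / 2 * (norm (r *\<^sub>R u))\<^sup>2"
    and "norm u = 1" "0 < r"
  shows "\<bar>(g (x + r *\<^sub>R u) - g x) / r - D \<bullet> u\<bar> \<le> c * r / 2"
proof -
  have "(g (x + r *\<^sub>R u) - g x) / r - D \<bullet> u = (g (x + r *\<^sub>R u) - g x - D \<bullet> (r *\<^sub>R u)) / r"
    using \<open>0 < r\<close> by (simp add: field_simps)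
  with quad \<open>norm u = 1\<close> \<open>0 < r\<close> show ?thesis
    by (simp add: abs_div divide_le_eq power2_eq_square mult_ac)
qed

section \<open>The uniform distribution on the unit sphere\<close>

lemma prob_space_uniform_sphere: "prob_space (uniform_sphere :: 'a::euclidean_space measure)"
proof -
  have "emeasure lborel (ball (0::'a) 1) \<noteq> 0"
    using content_ball_pos[of 1 "0::'a"] emeasure_lborel_ball_finite[of "0::'a" 1]
    by (simp add: emeasure_eq_ennreal_measure)
  moreover have "emeasure lborel (ball (0::'a) 1) \<noteq> \<infinity>"
    using emeasure_lborel_ball_finite[of "0::'a" 1] by simp
  ultimately have "prob_space (uniform_measure lborel (ball (0::'a) 1))"
    by (rule prob_space_uniform_measure)
  then show ?thesis
    unfolding uniform_sphere_def by (rule prob_space.prob_space_distr) simp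
qed

lemma sets_uniform_sphere [simp, measurable_cong]:
  "sets (uniform_sphere :: 'a::euclidean_space measure) = sets borel"
  unfolding uniform_sphere_def by simp

lemma space_uniform_sphere [simp]: "space (uniform_sphere :: 'a::euclidean_space measure) = UNIV"
  unfolding uniform_sphere_def by simp

lemma AE_uniform_sphere_norm: "AE u in (uniform_sphere :: 'a::euclidean_space measure). norm u = 1"
proof -
  have "AE x in lborel. x \<noteq> (0::'a)"
    by (rule AE_I'[of "{0}"]) (auto simp: null_sets_def)
  then have "AE x in uniform_measure lborel (ball 0 1). x \<noteq> (0::'a)"
    by (intro AE_uniform_measureI) auto
  then have "AE x in uniform_measure lborel (ball 0 1). norm (x /\<^sub>R norm x :: 'a) = 1"
    by eventually_elim simp
  then show ?thesis
    unfolding uniform_sphere_def by (subst AE_distr_iff) auto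
qed

lemma distr_uniform_sphere_orthogonal_transformation:
  fixes T :: "'a::euclidean_space \<Rightarrow> 'a"
  assumes T: "orthogonal_transformation T" and lborel_T: "distr lborel borel T = lborel"
  shows "distr uniform_sphere borel T = uniform_sphere"
proof -
  let ?B = "uniform_measure lborel (ball (0::'a) 1)" and ?N = "\<lambda>x::'a. x /\<^sub>R norm x"
  have T_meas [measurable]: "T \<in> borel_measurable borel"
    using T by (intro borel_measurable_continuous_onI linear_continuous_on
        linear_conv_bounded_linear[THEN iffD1] orthogonal_transformation_linear)
  have norm_T: "norm (T x) = norm x" for x
    using T by (simp add: orthogonal_transformation)
  have "distr ?B borel T = ?B"
  proof (rule measure_eqI)
    fix A assume "A \<in> sets (distr ?B borel T)"
    then have A [measurable]: "A \<in> sets borel" by simp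
    have TA: "T -` A \<in> sets borel" using T_meas A by (rule measurable_sets_borel)
    have "ball 0 1 \<inter> T -` A = T -` (ball 0 1 \<inter> A)" using norm_T by auto
    then have "emeasure lborel (ball 0 1 \<inter> T -` A) = emeasure (distr lborel borel T) (ball 0 1 \<inter> A)"
      by (simp add: emeasure_distr)
    also have "\<dots> = emeasure lborel (ball 0 1 \<inter> A)"
      unfolding lborel_T ..
    finally show "emeasure (distr ?B borel T) A = emeasure ?B A"
      by (simp add: emeasure_distr emeasure_uniform_measure TA Int_commute)
  qed simp
  have "distr uniform_sphere borel T = distr ?B borel (T \<circ> ?N)"
    unfolding uniform_sphere_def by (rule distr_distr) simp_all
  also have "T \<circ> ?N = ?N \<circ> T"
    using T by (auto simp: norm_T orthogonal_transformation_scaleR)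
  also have "distr ?B borel (?N \<circ> T) = distr (distr ?B borel T) borel ?N"
    by (rule distr_distr[symmetric]) simp_all
  also have "\<dots> = uniform_sphere"
    unfolding \<open>distr ?B borel T = ?B\<close> uniform_sphere_def ..
  finally show ?thesis .
qed

lemma prod_Basis_vec: "(\<Prod>b\<in>(Basis::(real^'n::finite) set). x \<bullet> b) = (\<Prod>k\<in>UNIV. x $ k)"
proof -
  have B: "(Basis::(real^'n) set) = range (\<lambda>k. axis k 1)"
    unfolding Basis_vec_def by auto
  have "inj (\<lambda>k::'n. axis k (1::real))"
    by (auto intro!: injI simp: axis_eq_axis)
  then show ?thesis
    unfolding B by (simp add: prod.reindex cart_eq_inner_axis)
qed

definition signed_permutation :: "('n \<Rightarrow> real) \<Rightarrow> ('n \<Rightarrow> 'n) \<Rightarrow> real^'n \<Rightarrow> real^'n" where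
  "signed_permutation s p x = (\<chi> k. s k * x $ p k)"

lemma orthogonal_transformation_signed_permutation:
  fixes p :: "'n::finite \<Rightarrow> 'n"
  assumes "bij p" "\<And>k. \<bar>s k\<bar> = 1"
  shows "orthogonal_transformation (signed_permutation s p)"
proof -
  have "linear (signed_permutation s p)"
    by (auto intro!: linearI simp: signed_permutation_def vec_eq_iff algebra_simps)
  moreover have "signed_permutation s p x \<bullet> signed_permutation s p x = x \<bullet> x" for x
  proof -
    have ss: "s k * s k = 1" for k
      using abs_mult_self_eq[of "s k"] assms(2)[of k] by simp
    have "signed_permutation s p x \<bullet> signed_permutation s p x = (\<Sum>k\<in>UNIV. (s k * s k) * (x $ p k * x $ p k))"
      unfolding inner_vec_def signed_permutation_def by (simp add: algebra_simps)
    also have "\<dots> = (\<Sum>k\<in>UNIV. x $ p k * x $ p k)"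
      by (simp add: ss)
    also have "\<dots> = x \<bullet> x"
      unfolding inner_vec_def using sum.reindex_bij_betw[of p UNIV UNIV "\<lambda>k. x $ k * x $ k"] assms(1)
      by (simp add: bij_betw_def)
    finally show ?thesis .
  qed
  ultimately show ?thesis
    by (simp add: orthogonal_transformation norm_eq_sqrt_inner)
qed

lemma lborel_distr_signed_permutation:
  fixes p :: "'n::finite \<Rightarrow> 'n"
  assumes p: "bij p" and s: "\<And>k. \<bar>s k\<bar> = 1"
  shows "distr lborel borel (signed_permutation s p) = lborel"
proof (rule lborel_eqI[symmetric])
  let ?T = "signed_permutation s p" and ?q = "inv p"
  fix l u :: "real^'n" assume lu: "\<And>b. b \<in> Basis \<Longrightarrow> l \<bullet> b \<le> u \<bullet> b"
  have le: "l $ k \<le> u $ k" for k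
    using lu[of "axis k 1"] by (auto simp: Basis_vec_def inner_axis)
  define l' where "l' = (\<chi> j. min (s (?q j) * l $ ?q j) (s (?q j) * u $ ?q j))"
  define u' where "u' = (\<chi> j. max (s (?q j) * l $ ?q j) (s (?q j) * u $ ?q j))"
  have pq: "p (?q j) = j" for j using p by (simp add: bij_is_surj surj_f_inv_f)
  have between: "a < c * z \<and> c * z < b \<longleftrightarrow> min (c * a) (c * b) < z \<and> z < max (c * a) (c * b)"
    if "\<bar>c\<bar> = 1" "a \<le> b" for a b c z :: real
    using that by (cases "c = 1") (auto simp: abs_if split: if_splits)
  have "x \<in> ?T -` box l u \<longleftrightarrow> x \<in> box l' u'" for x
  proof -
    have "x \<in> ?T -` box l u \<longleftrightarrow> (\<forall>k. l $ k < s k * x $ p k \<and> s k * x $ p k < u $ k)"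
      by (simp add: mem_box_cart signed_permutation_def)
    also have "\<dots> \<longleftrightarrow> (\<forall>j. l $ ?q j < s (?q j) * x $ j \<and> s (?q j) * x $ j < u $ ?q j)"
      by (metis pq bij_inv_eq_iff p)
    also have "\<dots> \<longleftrightarrow> x \<in> box l' u'"
      by (simp add: mem_box_cart l'_def u'_def between[OF s le])
    finally show ?thesis .
  qed
  then have pre: "?T -` box l u = box l' u'" by blast
  have l'u': "l' $ j \<le> u' $ j" "u' $ j - l' $ j = u $ ?q j - l $ ?q j" for j
    using s[of "?q j"] le[of "?q j"] by (auto simp: l'_def u'_def abs_if split: if_splits)
  have [measurable]: "?T \<in> borel_measurable borel"
    unfolding signed_permutation_def by (intro borel_measurable_continuous_onI continuous_intros)
  have "emeasure (distr lborel borel ?T) (box l u) = emeasure lborel (box l' u')"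
    by (simp add: emeasure_distr pre)
  also have "\<dots> = (\<Prod>b\<in>Basis. (u' - l') \<bullet> b)"
    using l'u'(1) by (auto simp: emeasure_lborel_box_eq Basis_vec_def inner_axis)
  also have "\<dots> = (\<Prod>j\<in>UNIV. (u - l) $ ?q j)"
    by (simp add: prod_Basis_vec l'u'(2))
  also have "\<dots> = (\<Prod>k\<in>UNIV. (u - l) $ k)"
    using prod.reindex_bij_betw[of ?q UNIV UNIV "\<lambda>k. (u - l) $ k"] bij_imp_bij_inv[OF p]
    by (simp add: bij_betw_def)
  finally show "emeasure (distr lborel borel ?T) (box l u) = (\<Prod>b\<in>Basis. (u - l) \<bullet> b)"
    by (simp add: prod_Basis_vec)
qed simp

lemma integral_uniform_sphere_signed_permutation:
  fixes p :: "'n::finite \<Rightarrow> 'n" and g :: "real^'n \<Rightarrow> real"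
  assumes "bij p" "\<And>k. \<bar>s k\<bar> = 1" and [measurable]: "g \<in> borel_measurable borel"
  shows "(\<integral>u. g (signed_permutation s p u) \<partial>uniform_sphere) = (\<integral>u. g u \<partial>uniform_sphere)"
proof -
  have T: "orthogonal_transformation (signed_permutation s p)"
    using assms(1,2) by (rule orthogonal_transformation_signed_permutation)
  then have [measurable]: "signed_permutation s p \<in> borel_measurable borel"
    by (intro borel_measurable_continuous_onI linear_continuous_on
        linear_conv_bounded_linear[THEN iffD1] orthogonal_transformation_linear)
  have "(\<integral>u. g u \<partial>uniform_sphere) = (\<integral>u. g u \<partial>distr uniform_sphere borel (signed_permutation s p))"
    using distr_uniform_sphere_orthogonal_transformation[OF T lborel_distr_signed_permutation[OF assms(1,2)]]
    by simp
  also have "\<dots> = (\<integral>u. g (signed_permutation s p u) \<partial>uniform_sphere)"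
    by (rule integral_distr) simp_all
  finally show ?thesis ..
qed

lemma integrable_uniform_sphere_component_product:
  "integrable (uniform_sphere :: (real^'n::finite) measure) (\<lambda>u. u $ i * u $ j)"
proof -
  interpret S: prob_space "uniform_sphere :: (real^'n) measure" by (rule prob_space_uniform_sphere)
  have "norm (u $ i * u $ j) \<le> 1" if "norm u = 1" for u :: "real^'n"
    using component_le_norm_cart[of u i] component_le_norm_cart[of u j] that
    by (simp add: abs_mult mult_le_one)
  with AE_uniform_sphere_norm show ?thesis
    by (intro S.integrable_const_bound[where B = 1]) (auto elim!: eventually_mono)
qed

lemma integral_uniform_sphere_component_product:
  "(\<integral>u. u $ i * u $ j \<partial>(uniform_sphere :: (real^'n::finite) measure)) =
    (if i = j then 1 / CARD('n) else 0)"
proof (cases "i = j")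
  case False
  let ?s = "\<lambda>k. if k = i then -1 else 1 :: real"
  have "(\<integral>u. u $ i * u $ j \<partial>uniform_sphere) =
        (\<integral>u. signed_permutation ?s id u $ i * signed_permutation ?s id u $ j \<partial>(uniform_sphere :: (real^'n) measure))"
    by (rule integral_uniform_sphere_signed_permutation[symmetric]) auto
  also have "\<dots> = - (\<integral>u. u $ i * u $ j \<partial>uniform_sphere)"
    using False by (simp add: signed_permutation_def)
  finally show ?thesis using False by simp
next
  case True
  interpret S: prob_space "uniform_sphere :: (real^'n) measure" by (rule prob_space_uniform_sphere)
  \<comment> \<open>all diagonal moments agree by symmetry, and they sum to \<open>\<integral> \<parallel>u\<parallel>\<^sup>2 = 1\<close>\<close>
  have diag: "(\<integral>u. u $ k * u $ k \<partial>uniform_sphere) = (\<integral>u. u $ i * u $ i \<partial>(uniform_sphere :: (real^'n) measure))"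
    for k :: 'n
  proof -
    have "(\<integral>u. u $ k * u $ k \<partial>uniform_sphere) =
      (\<integral>u. signed_permutation (\<lambda>_. 1) (Transposition.transpose i k) u $ k *
           signed_permutation (\<lambda>_. 1) (Transposition.transpose i k) u $ k \<partial>(uniform_sphere :: (real^'n) measure))"
      by (rule integral_uniform_sphere_signed_permutation[symmetric]) auto
    then show ?thesis by (simp add: signed_permutation_def)
  qed
  have "CARD('n) * (\<integral>u. u $ i * u $ i \<partial>(uniform_sphere :: (real^'n) measure)) =
        (\<Sum>k\<in>(UNIV::'n set). (\<integral>u. u $ i * u $ i \<partial>(uniform_sphere :: (real^'n) measure)))"
    by simp
  also have "\<dots> = (\<Sum>k\<in>UNIV. (\<integral>u. u $ k * u $ k \<partial>(uniform_sphere :: (real^'n) measure)))"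
    by (rule sum.cong[OF refl]) (rule diag[symmetric])
  also have "\<dots> = (\<integral>u. (\<Sum>k\<in>UNIV. u $ k * u $ k) \<partial>(uniform_sphere :: (real^'n) measure))"
    by (simp add: integrable_uniform_sphere_component_product)
  also have "\<dots> = (\<integral>u. 1 \<partial>(uniform_sphere :: (real^'n) measure))"
  proof (rule integral_cong_AE)
    have sum_squares: "(\<Sum>k\<in>UNIV. u $ k * u $ k) = (norm u)\<^sup>2" for u :: "real^'n"
      by (simp add: power2_norm_eq_inner inner_vec_def)
    from AE_uniform_sphere_norm show "AE u in (uniform_sphere :: (real^'n) measure). (\<Sum>k\<in>UNIV. u $ k * u $ k) = 1"
      by eventually_elim (simp add: sum_squares)
  qed (simp_all add: measurable_cong_sets[OF sets_uniform_sphere refl])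
  also have "\<dots> = 1"
    using S.prob_space by simp
  finally show ?thesis
    using True by (simp add: field_simps)
qed

lemma integral_uniform_sphere_inner_product:
  fixes a b :: "real^'n::finite"
  shows "integrable uniform_sphere (\<lambda>u. (a \<bullet> u) * (b \<bullet> u))"
    and "(\<integral>u. (a \<bullet> u) * (b \<bullet> u) \<partial>uniform_sphere) = (a \<bullet> b) / CARD('n)"
proof -
  have expand: "(\<lambda>u. (a \<bullet> u) * (b \<bullet> u)) = (\<lambda>u. \<Sum>i\<in>UNIV. \<Sum>j\<in>UNIV. (a $ i * b $ j) * (u $ i * u $ j))"
    by (auto simp: inner_vec_def sum_product algebra_simps)
  show "integrable uniform_sphere (\<lambda>u. (a \<bullet> u) * (b \<bullet> u))"
    unfolding expand
    by (auto intro!: integrable_sum integrable_mult_right integrable_uniform_sphere_component_product)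
  have "(\<integral>u. (a \<bullet> u) * (b \<bullet> u) \<partial>uniform_sphere) =
        (\<Sum>i\<in>UNIV. \<Sum>j\<in>UNIV. (a $ i * b $ j) * (if i = j then 1 / CARD('n) else 0))"
    unfolding expand
    by (simp add: integrable_uniform_sphere_component_product integral_uniform_sphere_component_product)
  also have "\<dots> = (a \<bullet> b) / CARD('n)"
    by (simp add: inner_vec_def sum_divide_distrib if_distrib[of "\<lambda>c. _ * c"] sum.delta cong: if_cong)
  finally show "(\<integral>u. (a \<bullet> u) * (b \<bullet> u) \<partial>uniform_sphere) = (a \<bullet> b) / CARD('n)" .
qed

lemma nn_integral_uniform_sphere_le_quadratic:
  fixes a b :: "real^'n::finite" and g :: "real^'n \<Rightarrow> real"
  assumes nonneg: "\<And>u. norm u = 1 \<Longrightarrow> 0 \<le> g u"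
    and bound: "\<And>u. norm u = 1 \<Longrightarrow> g u \<le> c + (a \<bullet> u) * (b \<bullet> u)"
  shows "(\<integral>\<^sup>+u. ennreal (g u) \<partial>uniform_sphere) \<le> ennreal (c + (a \<bullet> b) / CARD('n))"
    and "0 \<le> c + (a \<bullet> b) / CARD('n)"
proof -
  interpret S: prob_space "uniform_sphere :: (real^'n) measure" by (rule prob_space_uniform_sphere)
  define Q where "Q u = c + (a \<bullet> u) * (b \<bullet> u)" for u :: "real^'n"
  have "S.prob UNIV = 1" using S.prob_space by simp
  then have int_Q: "integrable uniform_sphere Q" and "(\<integral>u. Q u \<partial>uniform_sphere) = c + (a \<bullet> b) / CARD('n)"
    unfolding Q_def using integral_uniform_sphere_inner_product[of a b] by simp_all
  moreover have g_le_Q: "AE u in uniform_sphere. g u \<le> Q u"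
    using AE_uniform_sphere_norm by eventually_elim (simp add: Q_def bound)
  moreover have Q_nonneg: "AE u in uniform_sphere. 0 \<le> Q u"
    using AE_uniform_sphere_norm by eventually_elim (metis nonneg bound Q_def order_trans)
  ultimately show "0 \<le> c + (a \<bullet> b) / CARD('n)"
    using integral_nonneg_AE by metis
  have "(\<integral>\<^sup>+u. ennreal (g u) \<partial>uniform_sphere) \<le> (\<integral>\<^sup>+u. ennreal (Q u) \<partial>uniform_sphere)"
    using g_le_Q by (intro nn_integral_mono_AE) (auto elim!: eventually_mono intro: ennreal_leI)
  also have "\<dots> = ennreal (\<integral>u. Q u \<partial>uniform_sphere)"
    by (rule nn_integral_eq_integral[OF int_Q Q_nonneg])
  finally show "(\<integral>\<^sup>+u. ennreal (g u) \<partial>uniform_sphere) \<le> ennreal (c + (a \<bullet> b) / CARD('n))"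
    using \<open>(\<integral>u. Q u \<partial>uniform_sphere) = _\<close> by simp
qed

section \<open>Minimax problems satisfying the PL condition in \<open>y\<close>\<close>

locale pl_minimax =
  fixes f :: "'a::euclidean_space \<Rightarrow> 'b::euclidean_space \<Rightarrow> real" and \<mu> l :: real
  assumes dx: "\<forall>x y. (\<lambda>x'. f x' y) differentiable (at x)"
    and dy: "\<forall>x y. (f x) differentiable (at y)"
    and max_attained: "\<forall>x. \<exists>y. \<forall>y'. f x y' \<le> f x y"
    and mu_pos: "0 < \<mu>"
    and PL: "\<forall>x y. (norm (grad (f x) y))\<^sup>2 \<ge> 2 * \<mu> * (Phi f x - f x y)"
    and l_pos: "0 < l"
    and lip_x: "\<forall>x1 x2 y1 y2. norm (grad (\<lambda>x. f x y1) x1 - grad (\<lambda>x. f x y2) x2)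
                   \<le> l * (norm (x1 - x2) + norm (y1 - y2))"
    and lip_y: "\<forall>x1 x2 y1 y2. norm (grad (f x1) y1 - grad (f x2) y2)
                   \<le> l * (norm (x1 - x2) + norm (y1 - y2))"
begin

abbreviation \<Phi> where "\<Phi> \<equiv> Phi f"

definition grad_x where "grad_x x y = grad (\<lambda>x. f x y) x"
definition grad_y where "grad_y x y = grad (f x) y"
definition maximizer where "maximizer x = (SOME y. \<forall>y'. f x y' \<le> f x y)"

lemma has_derivative_grad_x: "((\<lambda>x. f x y) has_derivative (\<lambda>h. grad_x x y \<bullet> h)) (at x)"
  unfolding grad_x_def using dx has_derivative_grad by blast

lemma has_derivative_grad_y: "(f x has_derivative (\<lambda>h. grad_y x y \<bullet> h)) (at y)"
  unfolding grad_y_def using dy has_derivative_grad by blast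

lemma grad_x_lipschitz: "norm (grad_x x1 y1 - grad_x x2 y2) \<le> l * (norm (x1 - x2) + norm (y1 - y2))"
  unfolding grad_x_def using lip_x by blast

lemma grad_y_lipschitz: "norm (grad_y x1 y1 - grad_y x2 y2) \<le> l * (norm (x1 - x2) + norm (y1 - y2))"
  unfolding grad_y_def using lip_y by blast

lemma quadratic_bound_x: "\<bar>f (x + d) y - f x y - grad_x x y \<bullet> d\<bar> \<le> l / 2 * (norm d)\<^sup>2"
  using grad_x_lipschitz[of _ y _ y]
  by (intro lipschitz_gradient_quadratic_bound[where g = "\<lambda>x. f x y"] has_derivative_grad_x) simp

lemma quadratic_bound_y: "\<bar>f x (y + d) - f x y - grad_y x y \<bullet> d\<bar> \<le> l / 2 * (norm d)\<^sup>2"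
  using grad_y_lipschitz[of x _ x]
  by (intro lipschitz_gradient_quadratic_bound[where g = "f x"] has_derivative_grad_y) simp

lemma quadratic_bounds_x:
  "f (x + d) y \<le> f x y + grad_x x y \<bullet> d + l / 2 * (norm d)\<^sup>2"
  "f x y + grad_x x y \<bullet> d - l / 2 * (norm d)\<^sup>2 \<le> f (x + d) y"
  using quadratic_bound_x[where x = x and y = y and d = d] unfolding abs_le_iff by linarith+

lemma quadratic_bounds_y:
  "f x (y + d) \<le> f x y + grad_y x y \<bullet> d + l / 2 * (norm d)\<^sup>2"
  "f x y + grad_y x y \<bullet> d - l / 2 * (norm d)\<^sup>2 \<le> f x (y + d)"
  using quadratic_bound_y[where x = x and y = y and d = d] unfolding abs_le_iff by linarith+

lemma f_le_maximizer: "f x y \<le> f x (maximizer x)"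
  unfolding maximizer_def using someI_ex[OF max_attained[rule_format, of x]] by blast

lemma Phi_eq_maximizer: "\<Phi> x = f x (maximizer x)"
  unfolding Phi_def by (rule cSup_eq_maximum) (auto intro: f_le_maximizer)

lemma f_le_Phi: "f x y \<le> \<Phi> x"
  using Phi_eq_maximizer f_le_maximizer by simp

lemma Phi_gap_le_PL: "\<Phi> x - f x y \<le> (norm (grad_y x y))\<^sup>2 / (2 * \<mu>)"
  using PL mu_pos unfolding grad_y_def by (simp add: pos_le_divide_eq mult.commute)

lemma Phi_gap_ge: "(norm (grad_y x y))\<^sup>2 / (2 * l) \<le> \<Phi> x - f x y"
proof -
  \<comment> \<open>one gradient-ascent step of length \<open>1/l\<close> in \<open>y\<close> cannot overshoot \<open>\<Phi> x\<close>\<close>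
  let ?g = "grad_y x y"
  have "f x y + ?g \<bullet> ((1/l) *\<^sub>R ?g) - l / 2 * (norm ((1/l) *\<^sub>R ?g))\<^sup>2 \<le> f x (y + (1/l) *\<^sub>R ?g)"
    by (rule quadratic_bounds_y(2))
  also have "\<dots> \<le> \<Phi> x" by (rule f_le_Phi)
  moreover have "?g \<bullet> ((1/l) *\<^sub>R ?g) = (norm ?g)\<^sup>2 / l"
    by (simp add: power2_norm_eq_inner)
  moreover have "l / 2 * (norm ((1/l) *\<^sub>R ?g))\<^sup>2 = (norm ?g)\<^sup>2 / (2 * l)"
    using l_pos by (simp add: power2_eq_square field_simps)
  moreover have "(norm ?g)\<^sup>2 / l = 2 * ((norm ?g)\<^sup>2 / (2 * l))"
    by simp
  ultimately show ?thesis
    by linarith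
qed

lemma grad_y_maximizer: "grad_y x (maximizer x) = 0"
proof -
  have "(\<lambda>h. grad_y x (maximizer x) \<bullet> h) = (\<lambda>h. 0)"
    by (rule differential_zero_maxmin[of "maximizer x" UNIV, OF _ _ has_derivative_grad_y])
      (auto intro: f_le_maximizer)
  then have "grad_y x (maximizer x) \<bullet> grad_y x (maximizer x) = 0" by metis
  then show ?thesis by simp
qed

lemma Phi_eq_f_if_l_less_mu:
  assumes "l < \<mu>"
  shows "\<Phi> x = f x y"
proof -
  have "(norm (grad_y x y))\<^sup>2 / (2 * l) \<le> (norm (grad_y x y))\<^sup>2 / (2 * \<mu>)"
    using Phi_gap_ge Phi_gap_le_PL by (rule order_trans)
  with assms l_pos have "(norm (grad_y x y))\<^sup>2 = 0"
    by (smt (verit, best) divide_strict_left_mono mult_pos_pos zero_le_power2)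
  then show ?thesis using Phi_gap_le_PL[of x y] f_le_Phi[of x y] by simp
qed

text \<open>Danskin's theorem.  Since \<open>grad_y\<close> vanishes at the maximizer, the PL inequality turns its
  Lipschitz continuity into a quadratic bound on how fast \<open>\<Phi>\<close> can grow.\<close>

lemma Phi_quadratic_bounds:
  "\<Phi> x + grad_x x (maximizer x) \<bullet> d - l / 2 * (norm d)\<^sup>2 \<le> \<Phi> (x + d)"
  "\<Phi> (x + d) \<le> \<Phi> x + grad_x x (maximizer x) \<bullet> d + (l / 2 + l\<^sup>2 / (2 * \<mu>)) * (norm d)\<^sup>2"
proof -
  let ?y = "maximizer x"
  show "\<Phi> x + grad_x x ?y \<bullet> d - l / 2 * (norm d)\<^sup>2 \<le> \<Phi> (x + d)"
    using quadratic_bounds_x(2)[where x = x and y = ?y and d = d] f_le_Phi[of "x + d" ?y] Phi_eq_maximizer[of x] by linarith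
  have "norm (grad_y (x + d) ?y) \<le> l * norm d"
    using grad_y_lipschitz[of "x + d" ?y x ?y] grad_y_maximizer[of x] by simp
  then have "(norm (grad_y (x + d) ?y))\<^sup>2 / (2 * \<mu>) \<le> (l * norm d)\<^sup>2 / (2 * \<mu>)"
    using mu_pos by (intro divide_right_mono power_mono) auto
  also have "\<dots> = l\<^sup>2 / (2 * \<mu>) * (norm d)\<^sup>2"
    by (simp add: power_mult_distrib)
  finally have "(norm (grad_y (x + d) ?y))\<^sup>2 / (2 * \<mu>) \<le> l\<^sup>2 / (2 * \<mu>) * (norm d)\<^sup>2" .
  then have "\<Phi> (x + d) - f (x + d) ?y \<le> l\<^sup>2 / (2 * \<mu>) * (norm d)\<^sup>2"
    using Phi_gap_le_PL[of "x + d" ?y] by linarith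
  then show "\<Phi> (x + d) \<le> \<Phi> x + grad_x x ?y \<bullet> d + (l / 2 + l\<^sup>2 / (2 * \<mu>)) * (norm d)\<^sup>2"
    using quadratic_bounds_x(1)[where x = x and y = ?y and d = d] Phi_eq_maximizer[of x] unfolding distrib_right by linarith
qed

lemma Phi_quadratic_remainder:
  "\<bar>\<Phi> (x + d) - \<Phi> x - grad_x x (maximizer x) \<bullet> d\<bar> \<le> (l / 2 + l\<^sup>2 / (2 * \<mu>)) * (norm d)\<^sup>2"
  using Phi_quadratic_bounds[where x = x and d = d] mu_pos
  by (simp add: abs_le_iff algebra_simps) (smt (verit) divide_nonneg_pos mult_nonneg_nonneg zero_le_power2)

lemma grad_Phi: "grad \<Phi> x = grad_x x (maximizer x)"
  by (rule grad_eqI[OF has_derivative_of_quadratic_remainder[OF Phi_quadratic_remainder]])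

lemma Phi_upper_bound: "\<Phi> (x + d) \<le> \<Phi> x + grad \<Phi> x \<bullet> d + (l / 2 + l\<^sup>2 / (2 * \<mu>)) * (norm d)\<^sup>2"
  unfolding grad_Phi by (rule Phi_quadratic_bounds(2))

lemma continuous_on_grad_Phi: "continuous_on UNIV (grad \<Phi>)"
proof -
  have "lipschitz_on (6 * (l / 2 + l\<^sup>2 / (2 * \<mu>))) UNIV (grad \<Phi>)"
    using gradient_lipschitz_of_quadratic_remainder[OF Phi_quadratic_remainder] l_pos mu_pos
    by (intro lipschitz_onI) (auto simp: dist_norm grad_Phi)
  then show ?thesis by (rule lipschitz_on_continuous_on)
qed

lemma continuous_on_Phi: "continuous_on UNIV \<Phi>"
  using has_derivative_of_quadratic_remainder[OF Phi_quadratic_remainder]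
  by (intro continuous_at_imp_continuous_on ballI has_derivative_continuous) blast

lemma grad_x_error_bound:
  "(norm (grad_x x y - grad \<Phi> x))\<^sup>2 \<le> 4 * (l + l\<^sup>2 / (2 * \<mu>)) * (\<Phi> x - f x y)"
proof -
  \<comment> \<open>test the sandwich \<open>f (x + d) y \<le> \<Phi> (x + d)\<close> along \<open>d = e / (2 L)\<close>\<close>
  define L where "L = l + l\<^sup>2 / (2 * \<mu>)"
  have "L > 0" unfolding L_def using l_pos mu_pos by (simp add: add_pos_nonneg)
  define e where "e = grad_x x y - grad \<Phi> x"
  define d where "d = (1 / (2 * L)) *\<^sub>R e"
  have "f x y + grad_x x y \<bullet> d - l / 2 * (norm d)\<^sup>2 \<le> \<Phi> x + grad \<Phi> x \<bullet> d + (l / 2 + l\<^sup>2 / (2 * \<mu>)) * (norm d)\<^sup>2"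
    using quadratic_bounds_x(2)[where x = x and y = y and d = d] f_le_Phi[of "x + d" y] Phi_upper_bound[where x = x and d = d] by linarith
  then have "e \<bullet> d \<le> (\<Phi> x - f x y) + L * (norm d)\<^sup>2"
    unfolding e_def L_def by (simp add: inner_diff_left algebra_simps)
  moreover have "e \<bullet> d = (norm e)\<^sup>2 / (2 * L)"
    unfolding d_def by (simp add: power2_norm_eq_inner)
  moreover have "L * (norm d)\<^sup>2 = (norm e)\<^sup>2 / (4 * L)"
    unfolding d_def using \<open>L > 0\<close> by (simp add: power2_eq_square field_simps)
  ultimately have "(norm e)\<^sup>2 / (4 * L) \<le> \<Phi> x - f x y"
    by (simp add: field_simps)
  then show ?thesis
    using \<open>L > 0\<close> unfolding e_def L_def[symmetric] by (simp add: divide_le_eq mult.commute)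
qed

lemma f_quadratic_remainder:
  "\<bar>f (x + d) (y + s) - f x y - (grad_x x y, grad_y x y) \<bullet> (d, s)\<bar> \<le> l * (norm (d, s))\<^sup>2"
proof -
  \<comment> \<open>move first in \<open>x\<close>, then in \<open>y\<close>, and account for the change of \<open>grad_y\<close> on the way\<close>
  let ?g = "grad_y (x + d) y"
  have "\<bar>(?g - grad_y x y) \<bullet> s\<bar> \<le> norm (?g - grad_y x y) * norm s"
    by (rule Cauchy_Schwarz_ineq2)
  also have "\<dots> \<le> (l * norm d) * norm s"
    using grad_y_lipschitz[of "x + d" y x y] by (intro mult_right_mono) auto
  also have "\<dots> \<le> l / 2 * (norm d)\<^sup>2 + l / 2 * (norm s)\<^sup>2"
    using l_pos mult_left_mono[OF sum_squares_bound[of "norm d" "norm s"], of "l / 2"]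
    by (simp add: power2_eq_square algebra_simps)
  finally have cross: "\<bar>(?g - grad_y x y) \<bullet> s\<bar> \<le> l / 2 * (norm d)\<^sup>2 + l / 2 * (norm s)\<^sup>2" .
  have "f (x + d) (y + s) - f x y - (grad_x x y, grad_y x y) \<bullet> (d, s) =
      (f (x + d) (y + s) - f (x + d) y - ?g \<bullet> s) + (f (x + d) y - f x y - grad_x x y \<bullet> d)
      + (?g - grad_y x y) \<bullet> s"
    by (simp add: inner_diff_left)
  then have "\<bar>f (x + d) (y + s) - f x y - (grad_x x y, grad_y x y) \<bullet> (d, s)\<bar> \<le>
      l / 2 * (norm s)\<^sup>2 + l / 2 * (norm d)\<^sup>2 + (l / 2 * (norm d)\<^sup>2 + l / 2 * (norm s)\<^sup>2)"
    using quadratic_bound_y[where x = "x + d" and y = y and d = s] quadratic_bound_x[where x = x and y = y and d = d] cross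
    unfolding abs_le_iff by (intro conjI; linarith)
  also have "\<dots> = l * (norm (d, s))\<^sup>2"
    by (simp add: norm_Pair algebra_simps)
  finally show ?thesis .
qed

lemma continuous_on_f: "continuous_on UNIV (\<lambda>p. f (fst p) (snd p))"
proof -
  have "((\<lambda>p. f (fst p) (snd p)) has_derivative (\<lambda>h. (grad_x (fst p) (snd p), grad_y (fst p) (snd p)) \<bullet> h)) (at p)"
    for p :: "'a \<times> 'b"
    by (rule has_derivative_of_quadratic_remainder) (use f_quadratic_remainder in \<open>auto simp: case_prod_beta\<close>)
  then show ?thesis
    by (intro continuous_at_imp_continuous_on ballI has_derivative_continuous) blast
qed
end

section \<open>Iterations driven by independent random inputs\<close>

primrec driven_orbit :: "('s \<Rightarrow> 'w \<Rightarrow> 's) \<Rightarrow> 's \<Rightarrow> (nat \<Rightarrow> 'w) \<Rightarrow> nat \<Rightarrow> 's" where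
  "driven_orbit F init w 0 = init"
| "driven_orbit F init w (Suc t) = F (driven_orbit F init w t) (w t)"

lemma driven_orbit_cong:
  "(\<And>s. s < t \<Longrightarrow> w s = w' s) \<Longrightarrow> driven_orbit F init w t = driven_orbit F init w' t"
  by (induction t) auto

lemma measurable_driven_orbit:
  fixes F :: "'s::topological_space \<Rightarrow> 'w::topological_space \<Rightarrow> 's"
  assumes F: "(\<lambda>p. F (fst p) (snd p)) \<in> borel \<Otimes>\<^sub>M borel \<rightarrow>\<^sub>M borel" and "{..<t} \<subseteq> I"
  shows "(\<lambda>w. driven_orbit F init w t) \<in> Pi\<^sub>M I (\<lambda>_. borel) \<rightarrow>\<^sub>M borel"
  using assms(2)
proof (induction t)
  case (Suc t)
  then have "t \<in> I" "{..<t} \<subseteq> I" by auto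
  with Suc.IH have IH: "(\<lambda>w. driven_orbit F init w t) \<in> Pi\<^sub>M I (\<lambda>_. borel) \<rightarrow>\<^sub>M borel"
    by blast
  then have "(\<lambda>w. (driven_orbit F init w t, w t)) \<in> Pi\<^sub>M I (\<lambda>_. borel) \<rightarrow>\<^sub>M borel \<Otimes>\<^sub>M borel"
    using measurable_component_singleton[OF \<open>t \<in> I\<close>] by (intro measurable_Pair) auto
  from measurable_compose[OF this F] show ?case by simp
qed simp

lemma measurable_driven_orbit_random:
  fixes F :: "'s::topological_space \<Rightarrow> 'w::topological_space \<Rightarrow> 's" and W :: "nat \<Rightarrow> 'a \<Rightarrow> 'w"
  assumes F: "(\<lambda>p. F (fst p) (snd p)) \<in> borel \<Otimes>\<^sub>M borel \<rightarrow>\<^sub>M borel"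
    and W: "\<And>t. W t \<in> M \<rightarrow>\<^sub>M borel"
  shows "(\<lambda>\<omega>. driven_orbit F init (\<lambda>s. W s \<omega>) t) \<in> M \<rightarrow>\<^sub>M borel"
proof (induction t)
  case 0
  show ?case by (simp only: driven_orbit.simps measurable_const space_borel UNIV_I)
next
  case (Suc t)
  then have "(\<lambda>\<omega>. (driven_orbit F init (\<lambda>s. W s \<omega>) t, W t \<omega>)) \<in> M \<rightarrow>\<^sub>M borel \<Otimes>\<^sub>M borel"
    using W by (intro measurable_Pair)
  from measurable_compose[OF this F] show ?case
    by (simp only: driven_orbit.simps fst_conv snd_conv)
qed

lemma (in prob_space) nn_integral_indep_var:
  assumes indep: "indep_var S X T Y" and h: "h \<in> borel_measurable (S \<Otimes>\<^sub>M T)"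
  shows "(\<integral>\<^sup>+\<omega>. h (X \<omega>, Y \<omega>) \<partial>M) = (\<integral>\<^sup>+\<omega>. \<integral>\<^sup>+b. h (X \<omega>, b) \<partial>distr M T Y \<partial>M)"
proof -
  from indep have XY: "distr M (S \<Otimes>\<^sub>M T) (\<lambda>\<omega>. (X \<omega>, Y \<omega>)) = distr M S X \<Otimes>\<^sub>M distr M T Y"
    and X_meas: "X \<in> M \<rightarrow>\<^sub>M S" and Y_meas: "Y \<in> M \<rightarrow>\<^sub>M T"
    unfolding indep_var_distribution_eq by auto
  interpret Y: prob_space "distr M T Y" by (rule prob_space_distr[OF Y_meas])
  have h': "h \<in> borel_measurable (distr M S X \<Otimes>\<^sub>M distr M T Y)"
    using h by (simp add: measurable_cong_sets[OF sets_pair_measure_cong[OF sets_distr sets_distr] refl])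
  have "(\<integral>\<^sup>+\<omega>. h (X \<omega>, Y \<omega>) \<partial>M) = (\<integral>\<^sup>+z. h z \<partial>(distr M S X \<Otimes>\<^sub>M distr M T Y))"
    using X_meas Y_meas h by (simp add: XY[symmetric] nn_integral_distr)
  also have "\<dots> = (\<integral>\<^sup>+a. \<integral>\<^sup>+b. h (a, b) \<partial>distr M T Y \<partial>distr M S X)"
    using h' by (rule Y.nn_integral_fst[symmetric])
  also have "\<dots> = (\<integral>\<^sup>+\<omega>. \<integral>\<^sup>+b. h (X \<omega>, b) \<partial>distr M T Y \<partial>M)"
    using Y.borel_measurable_nn_integral_fst[OF h'] by (simp add: nn_integral_distr[OF X_meas])
  finally show ?thesis .
qed

text \<open>The state after \<open>t\<close> steps depends only on the first \<open>t\<close> inputs, which are independent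
  of the next input \<open>W t\<close>: integrating over \<open>W t\<close> may be done with the state frozen.\<close>

lemma (in prob_space) nn_integral_driven_orbit_next_input:
  fixes F :: "'s::topological_space \<Rightarrow> 'w::topological_space \<Rightarrow> 's" and W :: "nat \<Rightarrow> 'a \<Rightarrow> 'w"
    and h :: "'s \<times> 'w \<Rightarrow> ennreal"
  assumes indep: "indep_vars (\<lambda>_. borel) W UNIV"
    and F: "(\<lambda>p. F (fst p) (snd p)) \<in> borel \<Otimes>\<^sub>M borel \<rightarrow>\<^sub>M borel"
    and h: "h \<in> borel_measurable (borel \<Otimes>\<^sub>M borel)"
  shows "(\<integral>\<^sup>+\<omega>. h (driven_orbit F init (\<lambda>s. W s \<omega>) t, W t \<omega>) \<partial>M) =
    (\<integral>\<^sup>+\<omega>. \<integral>\<^sup>+w. h (driven_orbit F init (\<lambda>s. W s \<omega>) t, w) \<partial>distr M borel (W t) \<partial>M)"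
proof -
  define S where "S = Pi\<^sub>M {..<t} (\<lambda>_. borel :: 'w measure)"
  define T where "T = Pi\<^sub>M {t} (\<lambda>_. borel :: 'w measure)"
  define X where "X \<omega> = restrict (\<lambda>i. W i \<omega>) {..<t}" for \<omega>
  define Y where "Y \<omega> = restrict (\<lambda>i. W i \<omega>) {t}" for \<omega>
  define \<Psi> where "\<Psi> w = driven_orbit F init w t" for w
  have W_meas: "W t \<in> M \<rightarrow>\<^sub>M borel"
    using indep unfolding indep_vars_def by auto
  have orbit_X: "driven_orbit F init (\<lambda>s. W s \<omega>) t = \<Psi> (X \<omega>)" for \<omega>
    unfolding \<Psi>_def X_def by (rule driven_orbit_cong) simp
  have XY: "indep_var S X T Y"
    unfolding S_def T_def X_def[abs_def] Y_def[abs_def] by (rule indep_var_restrict[OF indep]) auto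
  then have X_meas: "X \<in> M \<rightarrow>\<^sub>M S" and Y_meas: "Y \<in> M \<rightarrow>\<^sub>M T"
    unfolding indep_var_distribution_eq by auto
  have \<Psi>_meas: "\<Psi> \<in> S \<rightarrow>\<^sub>M borel"
    unfolding S_def \<Psi>_def by (rule measurable_driven_orbit[OF F]) simp
  have eval_meas: "(\<lambda>b. b t) \<in> T \<rightarrow>\<^sub>M borel"
    unfolding T_def by (rule measurable_component_singleton) simp
  define h' where "h' z = h (\<Psi> (fst z), snd z t)" for z
  have "(\<lambda>z. (\<Psi> (fst z), snd z t)) \<in> S \<Otimes>\<^sub>M T \<rightarrow>\<^sub>M borel \<Otimes>\<^sub>M borel"
    using \<Psi>_meas eval_meas by (intro measurable_Pair)
      (auto intro: measurable_compose[OF measurable_fst] measurable_compose[OF measurable_snd])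
  from measurable_compose[OF this h] have h'_meas: "h' \<in> borel_measurable (S \<Otimes>\<^sub>M T)"
    unfolding h'_def by simp
  have inner: "(\<integral>\<^sup>+b. h' (X \<omega>, b) \<partial>distr M T Y) = (\<integral>\<^sup>+w. h (\<Psi> (X \<omega>), w) \<partial>distr M borel (W t))" for \<omega>
  proof -
    have "X \<omega> \<in> space S" unfolding S_def X_def by (simp add: space_PiM)
    then have "(\<integral>\<^sup>+b. h' (X \<omega>, b) \<partial>distr M T Y) = (\<integral>\<^sup>+\<omega>'. h (\<Psi> (X \<omega>), W t \<omega>') \<partial>M)"
      using measurable_Pair2[OF h'_meas] by (simp add: nn_integral_distr[OF Y_meas] h'_def Y_def)
    also have "\<dots> = (\<integral>\<^sup>+w. h (\<Psi> (X \<omega>), w) \<partial>distr M borel (W t))"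
      using measurable_Pair2[OF h] by (simp add: nn_integral_distr[OF W_meas])
    finally show ?thesis .
  qed
  have "(\<integral>\<^sup>+\<omega>. h (driven_orbit F init (\<lambda>s. W s \<omega>) t, W t \<omega>) \<partial>M) = (\<integral>\<^sup>+\<omega>. h' (X \<omega>, Y \<omega>) \<partial>M)"
    unfolding h'_def Y_def orbit_X by simp
  also have "\<dots> = (\<integral>\<^sup>+\<omega>. \<integral>\<^sup>+b. h' (X \<omega>, b) \<partial>distr M T Y \<partial>M)"
    by (rule nn_integral_indep_var[OF XY h'_meas])
  finally show ?thesis
    unfolding inner orbit_X .
qed

lemma (in prob_space) driven_orbit_expected_step:
  fixes F :: "'s::topological_space \<Rightarrow> 'w::topological_space \<Rightarrow> 's" and W :: "nat \<Rightarrow> 'a \<Rightarrow> 'w"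
    and init :: 's and V c :: "'s \<Rightarrow> ennreal"
  defines "X t \<omega> \<equiv> driven_orbit F init (\<lambda>s. W s \<omega>) t"
  assumes indep: "indep_vars (\<lambda>_. borel) W UNIV"
    and distr_W: "distr M borel (W t) = N"
    and F: "(\<lambda>p. F (fst p) (snd p)) \<in> borel \<Otimes>\<^sub>M borel \<rightarrow>\<^sub>M borel"
    and V_meas: "V \<in> borel_measurable borel" and c_meas: "c \<in> borel_measurable borel"
    and descent: "\<And>s. (\<integral>\<^sup>+w. V (F s w) \<partial>N) + c s \<le> V s + K"
  shows "(\<integral>\<^sup>+\<omega>. V (X (Suc t) \<omega>) \<partial>M) + (\<integral>\<^sup>+\<omega>. c (X t \<omega>) \<partial>M) \<le> (\<integral>\<^sup>+\<omega>. V (X t \<omega>) \<partial>M) + K"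
proof -
  have W_meas: "W t \<in> M \<rightarrow>\<^sub>M borel" for t
    using indep unfolding indep_vars_def by auto
  have X_meas: "(\<lambda>\<omega>. X t \<omega>) \<in> M \<rightarrow>\<^sub>M borel"
    unfolding X_def using F W_meas by (rule measurable_driven_orbit_random)
  have VF: "(\<lambda>p. V (F (fst p) (snd p))) \<in> borel_measurable (borel \<Otimes>\<^sub>M borel)"
    using measurable_compose[OF F V_meas] .
  interpret N: prob_space N
    unfolding distr_W[symmetric] using W_meas by (rule prob_space_distr)
  have sets_N: "sets N = sets borel"
    using sets_distr[of M borel "W t"] unfolding distr_W .
  have "(\<lambda>p. V (F (fst p) (snd p))) \<in> borel_measurable (borel \<Otimes>\<^sub>M N)"
    unfolding measurable_cong_sets[OF sets_pair_measure_cong[OF refl sets_N] refl] by (rule VF)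
  then have "(\<lambda>s. \<integral>\<^sup>+w. V (F s w) \<partial>N) \<in> borel_measurable borel"
    by (rule N.borel_measurable_nn_integral_fst[where f = "\<lambda>p. V (F (fst p) (snd p))", simplified])
  note next_meas = measurable_compose[OF X_meas this]
  have "(\<integral>\<^sup>+\<omega>. V (X (Suc t) \<omega>) \<partial>M) = (\<integral>\<^sup>+\<omega>. \<integral>\<^sup>+w. V (F (X t \<omega>) w) \<partial>N \<partial>M)"
    using nn_integral_driven_orbit_next_input[OF indep F VF, of init t] by (simp add: X_def distr_W)
  also have "\<dots> + (\<integral>\<^sup>+\<omega>. c (X t \<omega>) \<partial>M) = (\<integral>\<^sup>+\<omega>. (\<integral>\<^sup>+w. V (F (X t \<omega>) w) \<partial>N) + c (X t \<omega>) \<partial>M)"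
    using next_meas measurable_compose[OF X_meas c_meas] by (rule nn_integral_add[symmetric])
  also have "\<dots> \<le> (\<integral>\<^sup>+\<omega>. V (X t \<omega>) + K \<partial>M)"
    by (intro nn_integral_mono descent)
  also have "\<dots> = (\<integral>\<^sup>+\<omega>. V (X t \<omega>) \<partial>M) + K"
    using measurable_compose[OF X_meas V_meas] by (simp add: nn_integral_add emeasure_space_1)
  finally show ?thesis .
qed

lemma (in prob_space) driven_orbit_expected_descent:
  fixes F :: "'s::topological_space \<Rightarrow> 'w::topological_space \<Rightarrow> 's" and W :: "nat \<Rightarrow> 'a \<Rightarrow> 'w"
    and init :: 's and V c :: "'s \<Rightarrow> ennreal"
  defines "X t \<omega> \<equiv> driven_orbit F init (\<lambda>s. W s \<omega>) t"
  assumes indep: "indep_vars (\<lambda>_. borel) W UNIV"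
    and distr_W: "\<And>t. distr M borel (W t) = N"
    and F: "(\<lambda>p. F (fst p) (snd p)) \<in> borel \<Otimes>\<^sub>M borel \<rightarrow>\<^sub>M borel"
    and V_meas: "V \<in> borel_measurable borel" and c_meas: "c \<in> borel_measurable borel"
    and descent: "\<And>s. (\<integral>\<^sup>+w. V (F s w) \<partial>N) + c s \<le> V s + K"
  shows "(\<integral>\<^sup>+\<omega>. V (X T \<omega>) \<partial>M) + (\<Sum>t<T. \<integral>\<^sup>+\<omega>. c (X t \<omega>) \<partial>M) \<le> V init + of_nat T * K"
proof (induction T)
  case (Suc T)
  have "(\<integral>\<^sup>+\<omega>. V (X (Suc T) \<omega>) \<partial>M) + (\<Sum>t<Suc T. \<integral>\<^sup>+\<omega>. c (X t \<omega>) \<partial>M)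
      = ((\<integral>\<^sup>+\<omega>. V (X (Suc T) \<omega>) \<partial>M) + (\<integral>\<^sup>+\<omega>. c (X T \<omega>) \<partial>M)) + (\<Sum>t<T. \<integral>\<^sup>+\<omega>. c (X t \<omega>) \<partial>M)"
    by (simp add: add_ac)
  also have "\<dots> \<le> ((\<integral>\<^sup>+\<omega>. V (X T \<omega>) \<partial>M) + K) + (\<Sum>t<T. \<integral>\<^sup>+\<omega>. c (X t \<omega>) \<partial>M)"
    unfolding X_def using driven_orbit_expected_step[OF indep distr_W F V_meas c_meas descent]
    by (rule add_right_mono)
  also have "\<dots> = ((\<integral>\<^sup>+\<omega>. V (X T \<omega>) \<partial>M) + (\<Sum>t<T. \<integral>\<^sup>+\<omega>. c (X t \<omega>) \<partial>M)) + K"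
    by (simp only: add_ac)
  also have "\<dots> \<le> (V init + of_nat T * K) + K"
    using Suc.IH by (rule add_right_mono)
  also have "\<dots> = V init + of_nat (Suc T) * K"
    by (simp add: distrib_right add_ac)
  finally show ?case .
qed (simp add: X_def emeasure_space_1)

lemma first_hitting_time_bound:
  fixes P :: "nat \<Rightarrow> bool"
  assumes "\<And>T. \<forall>t<T. \<not> P t \<Longrightarrow> real T \<le> B"
  shows "(\<exists>t. P t) \<and> real (LEAST t. P t) \<le> B"
proof
  show "\<exists>t. P t"
  proof (rule ccontr)
    assume "\<nexists>t. P t"
    then have "real (nat \<lceil>B\<rceil> + 1) \<le> B" using assms by blast
    then show False by linarith
  qed
  then show "real (LEAST t. P t) \<le> B"
    using assms not_less_Least by blast
qed

section \<open>Analysis of ZO-AGDA\<close>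

lemma product_perturbation_ge:
  fixes s p q r Q :: real
  assumes "\<bar>s - p\<bar> \<le> r" "\<bar>q\<bar> \<le> Q"
  shows "p * q - r * Q \<le> s * q"
proof -
  have "\<bar>(s - p) * q\<bar> \<le> r * Q"
    unfolding abs_mult using assms by (intro mult_mono) auto
  then show ?thesis
    by (simp add: abs_le_iff left_diff_distrib)
qed

lemma square_perturbation_le:
  fixes s p r \<eta> :: real
  assumes "\<bar>s - p\<bar> \<le> r" "0 < \<eta>"
  shows "s\<^sup>2 \<le> (1 + \<eta>) * p\<^sup>2 + (1 + 1 / \<eta>) * r\<^sup>2"
proof -
  define t where "t = s - p"
  have "t\<^sup>2 \<le> r\<^sup>2"
    using assms(1) unfolding t_def by (metis abs_ge_zero power2_abs power_mono)
  moreover have "0 \<le> (\<eta> * p - t)\<^sup>2 / \<eta>" using \<open>0 < \<eta>\<close> by simp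
  moreover have "(\<eta> * p - t)\<^sup>2 / \<eta> = \<eta> * p\<^sup>2 - 2 * p * t + t\<^sup>2 / \<eta>"
    using \<open>0 < \<eta>\<close> by (simp add: power2_eq_square field_simps)
  moreover have "t\<^sup>2 / \<eta> \<le> r\<^sup>2 / \<eta>"
    using \<open>t\<^sup>2 \<le> r\<^sup>2\<close> \<open>0 < \<eta>\<close> by (simp add: divide_right_mono)
  moreover have "s\<^sup>2 = p\<^sup>2 + 2 * p * t + t\<^sup>2"
    unfolding t_def by (simp add: power2_eq_square algebra_simps)
  ultimately show ?thesis
    by (simp add: algebra_simps)
qed

lemma perturbed_gradient_inner_bounds:
  fixes G e :: "'a::real_inner" and k :: real
  shows "(G + e) \<bullet> (G - k *\<^sub>R e) = (norm G)\<^sup>2 + (1 - k) * (G \<bullet> e) - k * (norm e)\<^sup>2"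
    and "0 \<le> k \<Longrightarrow> norm (G - k *\<^sub>R e) \<le> norm G + k * norm e"
    and "(G + e) \<bullet> (G + e) \<le> 5/4 * (norm G)\<^sup>2 + 5 * (norm e)\<^sup>2"
proof -
  show "(G + e) \<bullet> (G - k *\<^sub>R e) = (norm G)\<^sup>2 + (1 - k) * (G \<bullet> e) - k * (norm e)\<^sup>2"
    by (simp add: inner_add_left inner_diff_right power2_norm_eq_inner inner_commute algebra_simps)
  show "0 \<le> k \<Longrightarrow> norm (G - k *\<^sub>R e) \<le> norm G + k * norm e"
    using norm_triangle_ineq4[of G "k *\<^sub>R e"] by simp
  have "(G + e) \<bullet> (G + e) = (norm G)\<^sup>2 + 2 * (G \<bullet> e) + (norm e)\<^sup>2"
    by (simp add: inner_add_left inner_add_right power2_norm_eq_inner inner_commute)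
  moreover have "G \<bullet> e \<le> norm G * norm e"
    by (rule norm_cauchy_schwarz)
  moreover have "0 \<le> 1/4 * (norm G - 4 * norm e)\<^sup>2" by simp
  then have "2 * (norm G * norm e) \<le> 1/4 * (norm G)\<^sup>2 + 4 * (norm e)\<^sup>2"
    by (simp add: power2_eq_square algebra_simps)
  ultimately show "(G + e) \<bullet> (G + e) \<le> 5/4 * (norm G)\<^sup>2 + 5 * (norm e)\<^sup>2"
    by linarith
qed

lemma x_step_arith:
  fixes \<epsilon> g e c k Fw W FF B :: real
  assumes "0 \<le> g" "0 \<le> e" "\<bar>c\<bar> \<le> g * e" "3/8 \<le> k" "k \<le> 1/2"
    and "Fw = g\<^sup>2 + (1 - k) * c - k * e\<^sup>2" and "W \<le> g + k * e"
    and "FF \<le> 5/4 * g\<^sup>2 + 5 * e\<^sup>2" and "0 \<le> B" "B\<^sup>2 \<le> \<epsilon>\<^sup>2 / 24"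
  shows "- 8/3 * e\<^sup>2 - Fw + B * W + 3/16 * FF + \<epsilon>\<^sup>2/32 + 5/96 * \<epsilon>\<^sup>2 + \<epsilon> * g \<le> 7/8 * \<epsilon>\<^sup>2"
proof -
  \<comment> \<open>each cross term is split by AM-GM so that the \<open>g\<^sup>2\<close> and \<open>e\<^sup>2\<close> terms end up negative\<close>
  have "- (5/8) * (g * e) \<le> (1 - k) * c"
  proof -
    have "(1 - k) * (- (g * e)) \<le> (1 - k) * c"
      using assms(3,5) by (intro mult_left_mono) (auto simp: abs_le_iff)
    moreover have "(1 - k) * (g * e) \<le> 5/8 * (g * e)"
      using assms(1,2,4) by (intro mult_right_mono) auto
    ultimately show ?thesis by (simp add: algebra_simps)
  qed
  moreover have "5/8 * (g * e) \<le> 1/5 * g\<^sup>2 + 1/2 * e\<^sup>2"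
  proof -
    have "0 \<le> 1/5 * (g - 25/16 * e)\<^sup>2" by simp
    moreover have "1/5 * (g - 25/16 * e)\<^sup>2 = 1/5 * g\<^sup>2 - 5/8 * (g * e) + 125/256 * e\<^sup>2"
      by (simp add: power2_eq_square algebra_simps)
    ultimately show ?thesis using zero_le_power2[of e] by linarith
  qed
  moreover have "B * W \<le> B * g + B * (k * e)"
    using mult_left_mono[OF assms(7) assms(9)] by (simp add: algebra_simps)
  moreover have "B * g \<le> 1/8 * g\<^sup>2 + 2 * B\<^sup>2"
  proof -
    have "0 \<le> 1/8 * (g - 4 * B)\<^sup>2" by simp
    then show ?thesis by (simp add: power2_eq_square algebra_simps)
  qed
  moreover have "B * (k * e) \<le> 1/4 * e\<^sup>2 + 1/4 * B\<^sup>2"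
  proof -
    have "B * (k * e) \<le> B * (1/2 * e)"
      using assms(2,5,9) by (intro mult_left_mono mult_right_mono) auto
    moreover have "0 \<le> 1/4 * (e - B)\<^sup>2" by simp
    ultimately show ?thesis by (simp add: power2_eq_square algebra_simps)
  qed
  moreover have "\<epsilon> * g \<le> 2/5 * g\<^sup>2 + 5/8 * \<epsilon>\<^sup>2"
  proof -
    have "0 \<le> 2/5 * (g - 5/4 * \<epsilon>)\<^sup>2" by simp
    then show ?thesis by (simp add: power2_eq_square algebra_simps)
  qed
  moreover have "k * e\<^sup>2 \<le> 1/2 * e\<^sup>2"
    using assms(5) by (intro mult_right_mono) auto
  ultimately have "- Fw \<le> - g\<^sup>2 + (1/5 * g\<^sup>2 + 1/2 * e\<^sup>2) + 1/2 * e\<^sup>2"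
    and "B * W \<le> 1/8 * g\<^sup>2 + 1/4 * e\<^sup>2 + 9/4 * B\<^sup>2"
    and "\<epsilon> * g \<le> 2/5 * g\<^sup>2 + 5/8 * \<epsilon>\<^sup>2"
    using assms(6) by linarith+
  moreover have "3/16 * FF \<le> 15/64 * g\<^sup>2 + 15/16 * e\<^sup>2" and "9/4 * B\<^sup>2 \<le> 3/32 * \<epsilon>\<^sup>2"
    using assms(8,10) by linarith+
  moreover have "0 \<le> g\<^sup>2" "0 \<le> e\<^sup>2" "0 \<le> \<epsilon>\<^sup>2" by simp_all
  ultimately show ?thesis
    by linarith
qed

locale zo_agda_setting = pl_minimax f \<mu> l for f :: "real^'n \<Rightarrow> real^'m \<Rightarrow> real" and \<mu> l +
  fixes \<alpha> \<beta> \<mu>1 \<mu>2 \<epsilon> Pstar L :: real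
  assumes L_def: "L = l + l\<^sup>2 / (2 * \<mu>)"
    and alpha_pos: "0 < \<alpha>" and beta_pos: "0 < \<beta>" and eps_pos: "0 < \<epsilon>"
    and mu1_pos: "0 < \<mu>1" and mu2_pos: "0 < \<mu>2"
    and Pstar_le: "\<forall>x. Pstar \<le> Phi f x"
    and beta_le: "\<beta> \<le> 1 / (4 * real CARD('m) * L)"
    and alpha_le: "\<alpha> \<le> min (\<beta> / (32 * (l / \<mu>)\<^sup>2)) (1 / (10 * real CARD('n) * L))"
    and mu1_small: "(real CARD('n))\<^sup>2 * L\<^sup>2 * \<mu>1\<^sup>2 \<le> \<epsilon>\<^sup>2 / 6"
    and mu2_small: "\<beta> * (real CARD('m))\<^sup>2 * L\<^sup>2 * \<mu>2\<^sup>2 \<le> \<alpha> * \<epsilon>\<^sup>2 / 3"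
begin

definition x_update :: "real^'n \<Rightarrow> real^'m \<Rightarrow> real^'n \<Rightarrow> real^'n" where
  "x_update x y u = x - (\<alpha> * ((f (x + \<mu>1 *\<^sub>R u) y - f x y) / (\<mu>1 / real DIM(real^'n)))) *\<^sub>R u"

definition y_update :: "real^'n \<Rightarrow> real^'m \<Rightarrow> real^'m \<Rightarrow> real^'m" where
  "y_update x y v = y + (\<beta> * ((f x (y + \<mu>2 *\<^sub>R v) - f x y) / (\<mu>2 / real DIM(real^'m)))) *\<^sub>R v"

definition zo_step :: "(real^'n) \<times> (real^'m) \<Rightarrow> (real^'n) \<times> (real^'m) \<Rightarrow> (real^'n) \<times> (real^'m)" where
  "zo_step s w = (let x' = x_update (fst s) (snd s) (fst w) in (x', y_update x' (snd s) (snd w)))"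

lemma zo_agda_eq_driven_orbit:
  "zo_agda f \<alpha> \<beta> \<mu>1 \<mu>2 x0 y0 U V t = driven_orbit zo_step (x0, y0) (\<lambda>s. (U s, V s)) t"
proof (induction t)
  case (Suc t)
  have "zo_agda f \<alpha> \<beta> \<mu>1 \<mu>2 x0 y0 U V (Suc t) = zo_step (zo_agda f \<alpha> \<beta> \<mu>1 \<mu>2 x0 y0 U V t) (U t, V t)"
    by (simp add: zo_step_def x_update_def y_update_def Let_def)
  with Suc show ?case by simp
qed simp

lemma x_update_eq:
  "x_update x y u = x - (\<alpha> * real CARD('n) * ((f (x + \<mu>1 *\<^sub>R u) y - f x y) / \<mu>1)) *\<^sub>R u"
  unfolding x_update_def by (simp add: field_simps)

lemma y_update_eq:
  "y_update x y v = y + (\<beta> * real CARD('m) * ((f x (y + \<mu>2 *\<^sub>R v) - f x y) / \<mu>2)) *\<^sub>R v"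
  unfolding y_update_def by (simp add: field_simps)

definition potential :: "real^'n \<Rightarrow> real^'m \<Rightarrow> real" where
  "potential x y = \<Phi> x - Pstar + (\<Phi> x - f x y) / 2"

text \<open>\<open>\<rho>\<close> is the factor by which one \<open>y\<close>-step shrinks the gap \<open>\<Phi> x - f x y\<close> in expectation.\<close>

definition \<rho> where "\<rho> = min (\<mu> * \<beta>) (1/4)"

definition y_noise where "y_noise = \<beta> * (real CARD('m))\<^sup>2 * l\<^sup>2 * \<mu>2\<^sup>2 * (1 + l * \<beta>) / 4"

definition y_step_bound :: "real^'n \<Rightarrow> real^'m \<Rightarrow> real" where
  "y_step_bound x y = \<Phi> x - Pstar + ((1 - \<rho>) * (\<Phi> x - f x y) + y_noise) / 2"

lemma L_pos: "0 < L"
  unfolding L_def using l_pos mu_pos by (simp add: add_pos_nonneg)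

lemma l_le_L: "l \<le> L"
  unfolding L_def using mu_pos by simp

lemma l_beta_dim_le: "l * \<beta> * real CARD('m) \<le> 1/4"
proof -
  have "\<beta> * (4 * real CARD('m) * L) \<le> 1"
    using beta_le L_pos by (simp add: le_divide_eq mult.commute)
  moreover have "l * \<beta> * real CARD('m) \<le> L * \<beta> * real CARD('m)"
    using l_le_L beta_pos by (intro mult_right_mono) auto
  ultimately show ?thesis by (simp add: algebra_simps)
qed

lemma l_beta_le: "l * \<beta> \<le> 1/4"
proof -
  have "l * \<beta> * 1 \<le> l * \<beta> * real CARD('m)"
    using l_pos beta_pos by (intro mult_left_mono) simp_all
  with l_beta_dim_le show ?thesis by simp
qed

lemma alpha_dim_L_le: "\<alpha> * real CARD('n) * L \<le> 1/10"
proof -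
  have "\<alpha> \<le> 1 / (10 * real CARD('n) * L)"
    using alpha_le by simp
  with L_pos have "\<alpha> * (10 * real CARD('n) * L) \<le> 1"
    by (simp add: le_divide_eq)
  then show ?thesis by simp
qed

lemma alpha_L_le: "\<alpha> * L \<le> 1/10"
proof -
  have "\<alpha> * L * 1 \<le> \<alpha> * L * real CARD('n)"
    using alpha_pos L_pos by (intro mult_left_mono) simp_all
  with alpha_dim_L_le show ?thesis by (simp add: mult_ac)
qed

lemma rho_bounds: "0 \<le> \<rho>" "\<rho> \<le> 1/4" "\<rho> \<le> \<mu> * \<beta>"
  unfolding \<rho>_def using mu_pos beta_pos by auto

lemma potential_nonneg: "0 \<le> potential x y"
  unfolding potential_def using Pstar_le f_le_Phi[of x y] by force

lemma y_step_bound_nonneg: "0 \<le> y_step_bound x y"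
proof -
  have "0 \<le> (1 - \<rho>) * (\<Phi> x - f x y)"
    using rho_bounds f_le_Phi by (intro mult_nonneg_nonneg) auto
  moreover have "0 \<le> y_noise"
    unfolding y_noise_def using beta_pos l_pos by simp
  ultimately show ?thesis
    unfolding y_step_bound_def using Pstar_le by (simp add: add_nonneg_nonneg)
qed

lemma y_step_pointwise:
  fixes x :: "real^'n" and y v :: "real^'m"
  assumes v: "norm v = 1"
  defines "H \<equiv> grad_y x y" and "r \<equiv> l * \<mu>2 / 2"
  shows "potential x (y_update x y v) \<le>
     potential x y + (\<beta> * real CARD('m) * r * norm H + l * \<beta>\<^sup>2 * (real CARD('m))\<^sup>2 * r\<^sup>2) / 2
     + (H \<bullet> v) * (((\<beta> * real CARD('m) * (l * \<beta> * real CARD('m) - 1)) / 2) *\<^sub>R H \<bullet> v)"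
proof -
  define p where "p = H \<bullet> v"
  define s where "s = (f x (y + \<mu>2 *\<^sub>R v) - f x y) / \<mu>2"
  have s_p: "\<bar>s - p\<bar> \<le> r"
    unfolding s_def p_def H_def r_def
    by (rule difference_quotient_error[where g = "f x", OF quadratic_bound_y v mu2_pos])
  have "\<bar>p\<bar> \<le> norm H" using Cauchy_Schwarz_ineq2[of H v] v unfolding p_def by simp
  with s_p have sp: "p * p - r * norm H \<le> s * p"
    by (rule product_perturbation_ge)
  have ss: "s\<^sup>2 \<le> 2 * p\<^sup>2 + 2 * r\<^sup>2"
    using square_perturbation_le[OF s_p, of 1] by simp
  have "f x y + \<beta> * real CARD('m) * (s * p) - l / 2 * (\<beta>\<^sup>2 * (real CARD('m))\<^sup>2 * s\<^sup>2) \<le> f x (y_update x y v)"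
    using quadratic_bounds_y(2)[where x = x and y = y and d = "(\<beta> * real CARD('m) * s) *\<^sub>R v"] v
    by (simp add: y_update_eq s_def[symmetric] H_def[symmetric] p_def[symmetric] power_mult_distrib mult_ac)
  moreover have "\<beta> * real CARD('m) * (p * p - r * norm H) \<le> \<beta> * real CARD('m) * (s * p)"
    using sp beta_pos by (intro mult_left_mono) auto
  moreover have "l / 2 * (\<beta>\<^sup>2 * (real CARD('m))\<^sup>2 * s\<^sup>2) \<le> l / 2 * (\<beta>\<^sup>2 * (real CARD('m))\<^sup>2 * (2 * p\<^sup>2 + 2 * r\<^sup>2))"
    using ss l_pos by (intro mult_left_mono) auto
  ultimately have lower: "\<beta> * real CARD('m) * (p * p - r * norm H) - l * \<beta>\<^sup>2 * (real CARD('m))\<^sup>2 * (p\<^sup>2 + r\<^sup>2)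
      \<le> f x (y_update x y v) - f x y"
    by (simp add: algebra_simps)
  have "potential x (y_update x y v) = potential x y - (f x (y_update x y v) - f x y) / 2"
    unfolding potential_def by (simp add: field_simps)
  also have "\<dots> \<le> potential x y
      - (\<beta> * real CARD('m) * (p * p - r * norm H) - l * \<beta>\<^sup>2 * (real CARD('m))\<^sup>2 * (p\<^sup>2 + r\<^sup>2)) / 2"
    using lower by simp
  also have "\<dots> = potential x y + (\<beta> * real CARD('m) * r * norm H + l * \<beta>\<^sup>2 * (real CARD('m))\<^sup>2 * r\<^sup>2) / 2
      + (H \<bullet> v) * (((\<beta> * real CARD('m) * (l * \<beta> * real CARD('m) - 1)) / 2) *\<^sub>R H \<bullet> v)"
    unfolding inner_scaleR_left p_def[symmetric] by (simp add: power2_eq_square field_simps)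
  finally show ?thesis .
qed

lemma y_step_scalar:
  fixes x :: "real^'n" and y :: "real^'m"
  defines "H \<equiv> grad_y x y" and "r \<equiv> l * \<mu>2 / 2"
  shows "potential x y + (\<beta> * real CARD('m) * r * norm H + l * \<beta>\<^sup>2 * (real CARD('m))\<^sup>2 * r\<^sup>2) / 2
     + (H \<bullet> ((\<beta> * real CARD('m) * (l * \<beta> * real CARD('m) - 1)) / 2) *\<^sub>R H) / real CARD('m) \<le> y_step_bound x y"
proof -
  define a where "a = \<Phi> x - f x y"
  define h where "h = norm H"
  have "0 \<le> a" unfolding a_def using f_le_Phi by simp
  have "H \<bullet> H = h\<^sup>2" unfolding h_def by (simp add: power2_norm_eq_inner)
  then have HH: "(H \<bullet> ((\<beta> * real CARD('m) * (l * \<beta> * real CARD('m) - 1)) / 2) *\<^sub>R H) / real CARD('m) = - (\<beta> * h\<^sup>2) / 2 + l * \<beta>\<^sup>2 * real CARD('m) * h\<^sup>2 / 2"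
    unfolding inner_scaleR_right by (simp add: field_simps power2_eq_square)
  \<comment> \<open>AM-GM on the bias term, the step size condition on the curvature term, and PL on the gap\<close>
  have "\<beta> * real CARD('m) * r * h \<le> \<beta> * h\<^sup>2 / 4 + \<beta> * (real CARD('m))\<^sup>2 * r\<^sup>2"
  proof -
    have "0 \<le> \<beta> * (h / 2 - real CARD('m) * r)\<^sup>2" using beta_pos by simp
    then show ?thesis by (simp add: power2_eq_square algebra_simps)
  qed
  moreover have "l * \<beta>\<^sup>2 * real CARD('m) * h\<^sup>2 \<le> \<beta> * h\<^sup>2 / 4"
    using mult_right_mono[OF l_beta_dim_le, of "\<beta> * h\<^sup>2"] beta_pos by (simp add: power2_eq_square mult_ac)
  moreover have "\<rho> * a \<le> \<beta> * h\<^sup>2 / 2"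
  proof -
    have "\<rho> * a \<le> (\<mu> * \<beta>) * a" using rho_bounds \<open>0 \<le> a\<close> by (intro mult_right_mono) auto
    also have "\<dots> \<le> (\<mu> * \<beta>) * (h\<^sup>2 / (2 * \<mu>))"
      using Phi_gap_le_PL[of x y] mu_pos beta_pos unfolding a_def h_def H_def by (intro mult_left_mono) auto
    also have "\<dots> = \<beta> * h\<^sup>2 / 2" using mu_pos by (simp add: field_simps)
    finally show ?thesis .
  qed
  moreover have "\<beta> * (real CARD('m))\<^sup>2 * r\<^sup>2 + l * \<beta>\<^sup>2 * (real CARD('m))\<^sup>2 * r\<^sup>2 = y_noise"
    unfolding y_noise_def r_def by (simp add: power2_eq_square field_simps)
  ultimately show ?thesis
    unfolding HH y_step_bound_def potential_def a_def[symmetric] h_def[symmetric] by (simp add: field_simps)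
qed

lemma y_step_expected:
  "(\<integral>\<^sup>+v. ennreal (potential x (y_update x y v)) \<partial>uniform_sphere) \<le> ennreal (y_step_bound x y)"
proof -
  let ?H = "grad_y x y" and ?r = "l * \<mu>2 / 2"
  let ?c = "potential x y + (\<beta> * real CARD('m) * ?r * norm ?H + l * \<beta>\<^sup>2 * (real CARD('m))\<^sup>2 * ?r\<^sup>2) / 2"
    and ?b = "((\<beta> * real CARD('m) * (l * \<beta> * real CARD('m) - 1)) / 2) *\<^sub>R ?H"
  have "(\<integral>\<^sup>+v. ennreal (potential x (y_update x y v)) \<partial>uniform_sphere) \<le> ennreal (?c + (?H \<bullet> ?b) / real CARD('m))"
    by (rule nn_integral_uniform_sphere_le_quadratic(1), rule potential_nonneg, rule y_step_pointwise)
  also have "\<dots> \<le> ennreal (y_step_bound x y)"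
    by (intro ennreal_leI y_step_scalar)
  finally show ?thesis .
qed

lemma gradient_error_absorbed:
  "8/3 * \<alpha> * (norm (grad_x x y - grad \<Phi> x))\<^sup>2 \<le> \<rho> * (\<Phi> x - f x y) / 2"
proof (cases "\<mu> \<le> l")
  case True
  \<comment> \<open>here \<open>\<rho> = \<mu> \<beta>\<close>, and \<open>\<alpha> \<le> \<beta> \<mu>\<^sup>2 / (32 l\<^sup>2)\<close> makes \<open>\<alpha> L\<close> small compared to \<open>\<mu> \<beta>\<close>\<close>
  define a where "a = \<Phi> x - f x y"
  have "0 \<le> a" unfolding a_def using f_le_Phi by simp
  have "\<mu> * \<beta> \<le> 1/4"
    using l_beta_le True beta_pos by (meson mult_right_mono less_imp_le order_trans)
  then have "\<rho> = \<mu> * \<beta>" unfolding \<rho>_def by simp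
  have "\<alpha> \<le> \<beta> / (32 * (l / \<mu>)\<^sup>2)"
    using alpha_le by simp
  then have "32 * (l / \<mu>)\<^sup>2 * \<alpha> \<le> \<beta>"
    using l_pos mu_pos by (simp add: le_divide_eq mult.commute)
  then have "\<mu> * (32 * (l / \<mu>)\<^sup>2 * \<alpha>) \<le> \<mu> * \<beta>" using mu_pos by (intro mult_left_mono) auto
  moreover have "\<mu> * (32 * (l / \<mu>)\<^sup>2 * \<alpha>) = 32 * (l\<^sup>2 / \<mu>) * \<alpha>"
    using mu_pos by (simp add: power2_eq_square field_simps)
  moreover have "64/3 * L * \<alpha> \<le> 32 * (l\<^sup>2 / \<mu>) * \<alpha>"
  proof -
    have "l \<le> l\<^sup>2 / \<mu>" using True l_pos mu_pos by (simp add: power2_eq_square field_simps)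
    then have "64/3 * L \<le> 32 * (l\<^sup>2 / \<mu>)" unfolding L_def by simp
    then show ?thesis using alpha_pos by (intro mult_right_mono) auto
  qed
  ultimately have "64/3 * L * \<alpha> \<le> \<mu> * \<beta>" by linarith
  have "8/3 * \<alpha> * (norm (grad_x x y - grad \<Phi> x))\<^sup>2 \<le> 8/3 * \<alpha> * (4 * L * a)"
    using grad_x_error_bound[of x y] alpha_pos unfolding L_def[symmetric] a_def by (intro mult_left_mono) auto
  also have "\<dots> = (64/3 * L * \<alpha>) * a / 2" by simp
  also have "\<dots> \<le> (\<mu> * \<beta>) * a / 2"
    using \<open>64/3 * L * \<alpha> \<le> \<mu> * \<beta>\<close> \<open>0 \<le> a\<close> by (intro divide_right_mono mult_right_mono) auto
  finally show ?thesis unfolding \<open>\<rho> = \<mu> * \<beta>\<close> a_def .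
next
  case False
  then have "\<Phi> x = f x y" by (simp add: Phi_eq_f_if_l_less_mu)
  with grad_x_error_bound[of x y] show ?thesis by simp
qed


lemma x_curvature_le:
  assumes "0 \<le> k" "k \<le> 1/2"
  shows "(l / 2 + l\<^sup>2 / (2 * \<mu>) + k * L) * \<alpha>\<^sup>2 * (real CARD('n))\<^sup>2 \<le> 3/2 * L * \<alpha>\<^sup>2 * (real CARD('n))\<^sup>2"
proof -
  have "l / 2 + l\<^sup>2 / (2 * \<mu>) \<le> L" unfolding L_def using l_pos by simp
  moreover have "k * L \<le> 1/2 * L" using assms L_pos by (intro mult_right_mono) auto
  ultimately show ?thesis by (intro mult_right_mono) auto
qed

lemma x_curvature_over_dim_le:
  assumes "0 \<le> P" "P \<le> 3/2 * L * \<alpha>\<^sup>2 * (real CARD('n))\<^sup>2"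
  shows "5/4 * P / real CARD('n) \<le> 3/16 * \<alpha>"
proof -
  have "5/4 * P / real CARD('n) \<le> 5/4 * (3/2 * L * \<alpha>\<^sup>2 * (real CARD('n))\<^sup>2) / real CARD('n)"
    using assms by (intro divide_right_mono mult_left_mono) auto
  also have "\<dots> = 15/8 * \<alpha> * (\<alpha> * real CARD('n) * L)"
    by (simp add: power2_eq_square field_simps)
  also have "\<dots> \<le> 15/8 * \<alpha> * (1/10)"
    using alpha_dim_L_le alpha_pos by (intro mult_left_mono) auto
  finally show ?thesis by simp
qed

lemma x_bias_le: "(real CARD('n) * (l * \<mu>1 / 2))\<^sup>2 \<le> \<epsilon>\<^sup>2 / 24"
proof -
  have "l\<^sup>2 \<le> L\<^sup>2" using l_le_L l_pos by (intro power_mono) auto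
  have "(real CARD('n) * (l * \<mu>1 / 2))\<^sup>2 = (real CARD('n))\<^sup>2 * l\<^sup>2 * \<mu>1\<^sup>2 / 4"
    by (simp add: power_mult_distrib power_divide)
  also have "\<dots> \<le> (real CARD('n))\<^sup>2 * L\<^sup>2 * \<mu>1\<^sup>2 / 4"
    using \<open>l\<^sup>2 \<le> L\<^sup>2\<close> by (intro divide_right_mono mult_right_mono mult_left_mono) auto
  finally show ?thesis
    using mu1_small by simp
qed

lemma x_bias_curvature_le:
  assumes "0 \<le> P" "P \<le> 3/2 * L * \<alpha>\<^sup>2 * (real CARD('n))\<^sup>2"
  shows "5 * P * (l * \<mu>1 / 2)\<^sup>2 \<le> \<alpha> * \<epsilon>\<^sup>2 / 32"
proof -
  have "5 * P * (l * \<mu>1 / 2)\<^sup>2 \<le> 5 * (3/2 * L * \<alpha>\<^sup>2 * (real CARD('n))\<^sup>2) * (l * \<mu>1 / 2)\<^sup>2"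
    using assms by (intro mult_right_mono) auto
  also have "\<dots> = 15/2 * (\<alpha> * L) * \<alpha> * (real CARD('n) * (l * \<mu>1 / 2))\<^sup>2"
    by (simp add: power2_eq_square field_simps)
  also have "\<dots> \<le> 15/2 * (1/10) * \<alpha> * (\<epsilon>\<^sup>2 / 24)"
    using alpha_L_le x_bias_le alpha_pos L_pos by (intro mult_mono mult_nonneg_nonneg) auto
  finally show ?thesis by simp
qed

lemma y_noise_le: "y_noise / 2 \<le> 5/96 * \<alpha> * \<epsilon>\<^sup>2"
proof -
  have "l\<^sup>2 \<le> L\<^sup>2" using l_le_L l_pos by (intro power_mono) auto
  then have "\<beta> * (real CARD('m))\<^sup>2 * l\<^sup>2 * \<mu>2\<^sup>2 \<le> \<beta> * (real CARD('m))\<^sup>2 * L\<^sup>2 * \<mu>2\<^sup>2"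
    using beta_pos by (intro mult_right_mono mult_left_mono) auto
  with mu2_small have "\<beta> * (real CARD('m))\<^sup>2 * l\<^sup>2 * \<mu>2\<^sup>2 \<le> \<alpha> * \<epsilon>\<^sup>2 / 3" by linarith
  moreover have "1 + l * \<beta> \<le> 5/4" using l_beta_le by simp
  ultimately have "(\<beta> * (real CARD('m))\<^sup>2 * l\<^sup>2 * \<mu>2\<^sup>2) * (1 + l * \<beta>) / 8 \<le> (\<alpha> * \<epsilon>\<^sup>2 / 3) * (5/4) / 8"
    using beta_pos l_pos alpha_pos by (intro divide_right_mono mult_mono) auto
  then show ?thesis
    unfolding y_noise_def by simp
qed

lemma y_step_bound_after_x_move:
  fixes x d :: "real^'n" and y :: "real^'m"
  defines "k \<equiv> (1 - \<rho>) / 2"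
  shows "y_step_bound (x + d) y \<le> \<Phi> x - Pstar + k * (\<Phi> x - f x y)
     + (grad \<Phi> x - k *\<^sub>R (grad_x x y - grad \<Phi> x)) \<bullet> d
     + (l / 2 + l\<^sup>2 / (2 * \<mu>) + k * L) * (norm d)\<^sup>2 + y_noise / 2"
proof -
  define C where "C = l / 2 + l\<^sup>2 / (2 * \<mu>)"
  have "0 \<le> k" unfolding k_def using rho_bounds by auto
  have Phi_up: "\<Phi> (x + d) \<le> \<Phi> x + grad \<Phi> x \<bullet> d + C * (norm d)\<^sup>2"
    unfolding C_def by (rule Phi_upper_bound)
  have "\<Phi> (x + d) - f (x + d) y \<le> (\<Phi> x - f x y) + (grad \<Phi> x - grad_x x y) \<bullet> d + L * (norm d)\<^sup>2"
    using Phi_up quadratic_bounds_x(2)[where x = x and y = y and d = d] unfolding C_def L_def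
    by (simp add: inner_diff_left algebra_simps)
  from mult_left_mono[OF this \<open>0 \<le> k\<close>]
  have "y_step_bound (x + d) y \<le> (\<Phi> x + grad \<Phi> x \<bullet> d + C * (norm d)\<^sup>2) - Pstar
      + k * ((\<Phi> x - f x y) + (grad \<Phi> x - grad_x x y) \<bullet> d + L * (norm d)\<^sup>2) + y_noise / 2"
    using Phi_up unfolding y_step_bound_def k_def by (simp add: field_simps)
  also have "\<dots> = \<Phi> x - Pstar + k * (\<Phi> x - f x y) + (grad \<Phi> x - k *\<^sub>R (grad_x x y - grad \<Phi> x)) \<bullet> d
      + (C + k * L) * (norm d)\<^sup>2 + y_noise / 2"
    by (simp add: inner_diff_left algebra_simps)
  finally show ?thesis
    unfolding C_def .
qed

lemma x_step_pointwise:
  fixes x u :: "real^'n" and y :: "real^'m"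
  assumes u: "norm u = 1"
  defines "F \<equiv> grad_x x y" and "k \<equiv> (1 - \<rho>) / 2" and "r \<equiv> l * \<mu>1 / 2"
    and "P \<equiv> (l / 2 + l\<^sup>2 / (2 * \<mu>) + (1 - \<rho>) / 2 * L) * \<alpha>\<^sup>2 * (real CARD('n))\<^sup>2"
  defines "w \<equiv> grad \<Phi> x - k *\<^sub>R (F - grad \<Phi> x)"
  shows "y_step_bound (x_update x y u) y \<le>
     \<Phi> x - Pstar + k * (\<Phi> x - f x y) + \<alpha> * real CARD('n) * r * norm w + 5 * P * r\<^sup>2 + y_noise / 2
     + (F \<bullet> u) * (((5/4 * P) *\<^sub>R F - (\<alpha> * real CARD('n)) *\<^sub>R w) \<bullet> u)"
proof -
  let ?n = "real CARD('n)"
  define p where "p = F \<bullet> u"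
  define s where "s = (f (x + \<mu>1 *\<^sub>R u) y - f x y) / \<mu>1"
  have s_p: "\<bar>s - p\<bar> \<le> r"
    unfolding s_def p_def F_def r_def
    by (rule difference_quotient_error[where g = "\<lambda>x. f x y", OF quadratic_bound_x u mu1_pos])
  define d where "d = (- (\<alpha> * ?n * s)) *\<^sub>R u"
  have "x_update x y u = x + d"
    unfolding x_update_eq s_def d_def by simp
  moreover have "(grad \<Phi> x - k *\<^sub>R (grad_x x y - grad \<Phi> x)) \<bullet> d = - (\<alpha> * ?n * s * (w \<bullet> u))"
    unfolding d_def w_def F_def by simp
  moreover have "(l / 2 + l\<^sup>2 / (2 * \<mu>) + k * L) * (norm d)\<^sup>2 = P * s\<^sup>2"
    unfolding d_def P_def k_def using u by (simp add: power_mult_distrib)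
  ultimately have R1: "y_step_bound (x_update x y u) y \<le>
      \<Phi> x - Pstar + k * (\<Phi> x - f x y) - \<alpha> * ?n * s * (w \<bullet> u) + P * s\<^sup>2 + y_noise / 2"
    using y_step_bound_after_x_move[of x d y] unfolding k_def by simp
  have "\<bar>w \<bullet> u\<bar> \<le> norm w" using Cauchy_Schwarz_ineq2[of w u] u by simp
  with s_p have "p * (w \<bullet> u) - r * norm w \<le> s * (w \<bullet> u)"
    by (rule product_perturbation_ge)
  then have "\<alpha> * ?n * (p * (w \<bullet> u) - r * norm w) \<le> \<alpha> * ?n * (s * (w \<bullet> u))"
    using alpha_pos by (intro mult_left_mono) auto
  then have T1: "- (\<alpha> * ?n * s * (w \<bullet> u)) \<le> - (\<alpha> * ?n * (p * (w \<bullet> u))) + \<alpha> * ?n * (r * norm w)"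
    by (simp add: algebra_simps)
  have "s\<^sup>2 \<le> 5/4 * p\<^sup>2 + 5 * r\<^sup>2"
    using square_perturbation_le[OF s_p, of "1/4"] by simp
  moreover have "0 \<le> P"
    unfolding P_def using l_pos mu_pos rho_bounds L_pos by (intro mult_nonneg_nonneg add_nonneg_nonneg) auto
  ultimately have T2: "P * s\<^sup>2 \<le> P * (5/4 * p\<^sup>2 + 5 * r\<^sup>2)"
    by (rule mult_left_mono)
  have "\<Phi> x - Pstar + k * (\<Phi> x - f x y) + \<alpha> * ?n * r * norm w + 5 * P * r\<^sup>2 + y_noise / 2
     + (F \<bullet> u) * (((5/4 * P) *\<^sub>R F - (\<alpha> * ?n) *\<^sub>R w) \<bullet> u) =
     \<Phi> x - Pstar + k * (\<Phi> x - f x y) - \<alpha> * ?n * (p * (w \<bullet> u)) + \<alpha> * ?n * (r * norm w)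
     + P * (5/4 * p\<^sup>2 + 5 * r\<^sup>2) + y_noise / 2"
    unfolding p_def by (simp add: inner_diff_left algebra_simps power2_eq_square)
  with R1 T1 T2 show ?thesis by linarith
qed

lemma x_step_scalar:
  fixes x :: "real^'n" and y :: "real^'m"
  defines "F \<equiv> grad_x x y" and "k \<equiv> (1 - \<rho>) / 2" and "r \<equiv> l * \<mu>1 / 2"
    and "P \<equiv> (l / 2 + l\<^sup>2 / (2 * \<mu>) + (1 - \<rho>) / 2 * L) * \<alpha>\<^sup>2 * (real CARD('n))\<^sup>2"
  defines "w \<equiv> grad \<Phi> x - k *\<^sub>R (F - grad \<Phi> x)"
  shows "\<Phi> x - Pstar + k * (\<Phi> x - f x y) + \<alpha> * real CARD('n) * r * norm w + 5 * P * r\<^sup>2 + y_noise / 2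
     + (F \<bullet> ((5/4 * P) *\<^sub>R F - (\<alpha> * real CARD('n)) *\<^sub>R w)) / real CARD('n)
     \<le> potential x y + 7/8 * \<alpha> * \<epsilon>\<^sup>2 - \<alpha> * \<epsilon> * norm (grad \<Phi> x)"
proof -
  let ?n = "real CARD('n)" and ?G = "grad \<Phi> x"
  define e where "e = F - ?G"
  define g0 where "g0 = norm ?G"
  define e0 where "e0 = norm e"
  define a where "a = \<Phi> x - f x y"
  have k: "3/8 \<le> k" "k \<le> 1/2" "0 \<le> k" unfolding k_def using rho_bounds by auto
  have F_eq: "F = ?G + e" and w_eq: "w = ?G - k *\<^sub>R e"
    unfolding e_def w_def by simp_all
  note Fw = perturbed_gradient_inner_bounds(1)[of ?G e k, folded F_eq w_eq g0_def e0_def]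
    and W = perturbed_gradient_inner_bounds(2)[OF \<open>0 \<le> k\<close>, of ?G e, folded w_eq g0_def e0_def]
    and FF = perturbed_gradient_inner_bounds(3)[of ?G e, folded F_eq g0_def e0_def]
  have Ge: "\<bar>?G \<bullet> e\<bar> \<le> g0 * e0"
    unfolding g0_def e0_def by (rule Cauchy_Schwarz_ineq2)
  have "0 \<le> ?n * r" unfolding r_def using l_pos mu1_pos by simp
  with k Fw Ge W FF x_bias_le
  have core: "- 8/3 * e0\<^sup>2 - (F \<bullet> w) + (?n * r) * norm w + 3/16 * (F \<bullet> F) + \<epsilon>\<^sup>2/32 + 5/96 * \<epsilon>\<^sup>2 + \<epsilon> * g0
      \<le> 7/8 * \<epsilon>\<^sup>2"
    by (intro x_step_arith) (auto simp: g0_def e0_def r_def)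
  have "- (8/3 * \<alpha> * e0\<^sup>2) - \<alpha> * (F \<bullet> w) + \<alpha> * ((?n * r) * norm w) + 3/16 * \<alpha> * (F \<bullet> F)
      + \<alpha> * \<epsilon>\<^sup>2 / 32 + 5/96 * \<alpha> * \<epsilon>\<^sup>2 + \<alpha> * \<epsilon> * g0 \<le> \<alpha> * (7/8 * \<epsilon>\<^sup>2)"
    using mult_left_mono[OF core, of \<alpha>] alpha_pos by (simp add: algebra_simps)
  moreover have "8/3 * \<alpha> * e0\<^sup>2 \<le> \<rho> * a / 2"
    unfolding e0_def e_def F_def a_def by (rule gradient_error_absorbed)
  moreover have P: "0 \<le> P" "P \<le> 3/2 * L * \<alpha>\<^sup>2 * ?n\<^sup>2"
    unfolding P_def using l_pos mu_pos rho_bounds L_pos x_curvature_le[of "(1 - \<rho>) / 2"]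
    by (auto intro!: mult_nonneg_nonneg add_nonneg_nonneg)
  have "5/4 * P / ?n * (F \<bullet> F) \<le> 3/16 * \<alpha> * (F \<bullet> F)"
    using x_curvature_over_dim_le[OF P] by (intro mult_right_mono) auto
  moreover have "5 * P * r\<^sup>2 \<le> \<alpha> * \<epsilon>\<^sup>2 / 32"
    unfolding r_def by (rule x_bias_curvature_le[OF P])
  moreover have "(F \<bullet> ((5/4 * P) *\<^sub>R F - (\<alpha> * ?n) *\<^sub>R w)) / ?n = 5/4 * P / ?n * (F \<bullet> F) - \<alpha> * (F \<bullet> w)"
    by (simp add: inner_diff_right field_simps)
  moreover have "k * a = a / 2 - \<rho> * a / 2"
    unfolding k_def by (simp add: field_simps)
  moreover have "potential x y = \<Phi> x - Pstar + a / 2"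
    unfolding potential_def a_def ..
  ultimately show ?thesis
    using y_noise_le unfolding a_def[symmetric] g0_def[symmetric] by (simp add: mult_ac)
qed

lemma x_step_expected:
  "(\<integral>\<^sup>+u. ennreal (y_step_bound (x_update x y u) y) \<partial>uniform_sphere)
     \<le> ennreal (potential x y + 7/8 * \<alpha> * \<epsilon>\<^sup>2 - \<alpha> * \<epsilon> * norm (grad \<Phi> x))"
  "0 \<le> potential x y + 7/8 * \<alpha> * \<epsilon>\<^sup>2 - \<alpha> * \<epsilon> * norm (grad \<Phi> x)"
proof -
  let ?n = "real CARD('n)" and ?F = "grad_x x y" and ?k = "(1 - \<rho>) / 2" and ?r = "l * \<mu>1 / 2"
  let ?P = "(l / 2 + l\<^sup>2 / (2 * \<mu>) + (1 - \<rho>) / 2 * L) * \<alpha>\<^sup>2 * ?n\<^sup>2"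
  let ?w = "grad \<Phi> x - ?k *\<^sub>R (?F - grad \<Phi> x)"
  let ?c = "\<Phi> x - Pstar + ?k * (\<Phi> x - f x y) + \<alpha> * ?n * ?r * norm ?w + 5 * ?P * ?r\<^sup>2 + y_noise / 2"
    and ?b = "(5/4 * ?P) *\<^sub>R ?F - (\<alpha> * ?n) *\<^sub>R ?w"
  have "(\<integral>\<^sup>+u. ennreal (y_step_bound (x_update x y u) y) \<partial>uniform_sphere) \<le> ennreal (?c + (?F \<bullet> ?b) / ?n)"
    and "0 \<le> ?c + (?F \<bullet> ?b) / ?n"
    by (rule nn_integral_uniform_sphere_le_quadratic, rule y_step_bound_nonneg, rule x_step_pointwise,
        assumption)+
  with x_step_scalar[of x y] show
    "(\<integral>\<^sup>+u. ennreal (y_step_bound (x_update x y u) y) \<partial>uniform_sphere)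
       \<le> ennreal (potential x y + 7/8 * \<alpha> * \<epsilon>\<^sup>2 - \<alpha> * \<epsilon> * norm (grad \<Phi> x))"
    "0 \<le> potential x y + 7/8 * \<alpha> * \<epsilon>\<^sup>2 - \<alpha> * \<epsilon> * norm (grad \<Phi> x)"
    by (auto intro: order_trans ennreal_leI)
qed


lemma continuous_on_f_comp:
  "continuous_on S a \<Longrightarrow> continuous_on S b \<Longrightarrow> continuous_on S (\<lambda>z. f (a z) (b z))"
  using continuous_on_compose2[OF continuous_on_f, of S "\<lambda>z. (a z, b z)"] by (auto intro: continuous_on_Pair)

lemma continuous_on_zo_step: "continuous_on UNIV (\<lambda>p. zo_step (fst p) (snd p))"
proof -
  have x: "continuous_on S (\<lambda>z. x_update (X z) (Y z) (U z))"
    if "continuous_on S X" "continuous_on S Y" "continuous_on S U" for S X Y U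
    unfolding x_update_def using mu1_pos
    by (intro continuous_intros continuous_on_f_comp that) auto
  have y: "continuous_on S (\<lambda>z. y_update (X z) (Y z) (V z))"
    if "continuous_on S X" "continuous_on S Y" "continuous_on S V" for S X Y V
    unfolding y_update_def using mu2_pos
    by (intro continuous_intros continuous_on_f_comp that) auto
  show ?thesis
    unfolding zo_step_def Let_def by (intro continuous_on_Pair x y continuous_intros)
qed

lemma continuous_on_potential: "continuous_on UNIV (\<lambda>s. potential (fst s) (snd s))"
  unfolding potential_def
  by (intro continuous_intros continuous_on_f_comp continuous_on_compose2[OF continuous_on_Phi]) auto

lemma one_step_descent:
  "(\<integral>\<^sup>+w. ennreal (potential (fst (zo_step s w)) (snd (zo_step s w))) \<partial>(uniform_sphere \<Otimes>\<^sub>M uniform_sphere))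
     + ennreal (\<alpha> * \<epsilon> * norm (grad \<Phi> (fst s)))
   \<le> ennreal (potential (fst s) (snd s)) + ennreal (7/8 * \<alpha> * \<epsilon>\<^sup>2)"
proof -
  interpret S: prob_space "uniform_sphere :: (real^'m) measure" by (rule prob_space_uniform_sphere)
  obtain x y where s: "s = (x, y)" by (cases s)
  define h where "h w = ennreal (potential (fst (zo_step s w)) (snd (zo_step s w)))" for w
  have "continuous_on UNIV (Pair s)"
    by (intro continuous_on_Pair continuous_on_const continuous_on_id)
  then have "continuous_on UNIV (zo_step s)"
    using continuous_on_compose2[OF continuous_on_zo_step] by fastforce
  then have "continuous_on UNIV (\<lambda>w. potential (fst (zo_step s w)) (snd (zo_step s w)))"
    using continuous_on_compose2[OF continuous_on_potential] by fastforce
  from measurable_compose[OF borel_measurable_continuous_onI[OF this] measurable_ennreal]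
  have "h \<in> borel_measurable borel"
    unfolding h_def .
  then have h_meas: "h \<in> borel_measurable (uniform_sphere \<Otimes>\<^sub>M uniform_sphere)"
    unfolding measurable_cong_sets[OF sets_pair_measure_cong[OF sets_uniform_sphere sets_uniform_sphere] refl]
      borel_prod .
  \<comment> \<open>by Tonelli, average first over the \<open>y\<close>-direction \<open>v\<close>, then over the \<open>x\<close>-direction \<open>u\<close>\<close>
  have "(\<integral>\<^sup>+w. h w \<partial>(uniform_sphere \<Otimes>\<^sub>M uniform_sphere)) = (\<integral>\<^sup>+u. \<integral>\<^sup>+v. h (u, v) \<partial>uniform_sphere \<partial>uniform_sphere)"
    by (rule S.nn_integral_fst[symmetric, OF h_meas])
  also have "\<dots> \<le> (\<integral>\<^sup>+u. ennreal (y_step_bound (x_update x y u) y) \<partial>uniform_sphere)"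
  proof (rule nn_integral_mono)
    fix u
    have "(\<integral>\<^sup>+v. h (u, v) \<partial>uniform_sphere) =
        (\<integral>\<^sup>+v. ennreal (potential (x_update x y u) (y_update (x_update x y u) y v)) \<partial>uniform_sphere)"
      unfolding h_def s zo_step_def Let_def by simp
    also have "\<dots> \<le> ennreal (y_step_bound (x_update x y u) y)"
      by (rule y_step_expected)
    finally show "(\<integral>\<^sup>+v. h (u, v) \<partial>uniform_sphere) \<le> ennreal (y_step_bound (x_update x y u) y)" .
  qed
  also have "\<dots> \<le> ennreal (potential x y + 7/8 * \<alpha> * \<epsilon>\<^sup>2 - \<alpha> * \<epsilon> * norm (grad \<Phi> x))"
    by (rule x_step_expected(1))
  finally have "(\<integral>\<^sup>+w. h w \<partial>(uniform_sphere \<Otimes>\<^sub>M uniform_sphere)) + ennreal (\<alpha> * \<epsilon> * norm (grad \<Phi> x))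
      \<le> ennreal (potential x y + 7/8 * \<alpha> * \<epsilon>\<^sup>2 - \<alpha> * \<epsilon> * norm (grad \<Phi> x)) + ennreal (\<alpha> * \<epsilon> * norm (grad \<Phi> x))"
    by (rule add_right_mono)
  also have "\<dots> = ennreal (potential x y) + ennreal (7/8 * \<alpha> * \<epsilon>\<^sup>2)"
    using x_step_expected(2)[of x y] alpha_pos eps_pos potential_nonneg[of x y]
    by (simp add: ennreal_plus[symmetric] del: ennreal_plus)
  finally show ?thesis
    unfolding h_def s by simp
qed

lemma expected_gradient_norm_sum_le:
  fixes M :: "'w measure" and u :: "nat \<Rightarrow> 'w \<Rightarrow> real^'n" and v :: "nat \<Rightarrow> 'w \<Rightarrow> real^'m"
  assumes M: "prob_space M"
    and indep: "prob_space.indep_vars M (\<lambda>_. borel) (\<lambda>t \<omega>. (u t \<omega>, v t \<omega>)) UNIV"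
    and distr_uv: "\<forall>t. distr M borel (\<lambda>\<omega>. (u t \<omega>, v t \<omega>)) = uniform_sphere \<Otimes>\<^sub>M uniform_sphere"
  shows "(\<Sum>t<T. ennreal (\<alpha> * \<epsilon>) * (\<integral>\<^sup>+\<omega>. ennreal (norm (grad \<Phi>
            (fst (zo_agda f \<alpha> \<beta> \<mu>1 \<mu>2 x0 y0 (\<lambda>s. u s \<omega>) (\<lambda>s. v s \<omega>) t)))) \<partial>M))
    \<le> ennreal (potential x0 y0 + real T * (7/8 * \<alpha> * \<epsilon>\<^sup>2))"
proof -
  interpret prob_space M by (rule M)
  let ?X = "\<lambda>t \<omega>. driven_orbit zo_step (x0, y0) (\<lambda>s. (u s \<omega>, v s \<omega>)) t"
  have F: "(\<lambda>p. zo_step (fst p) (snd p)) \<in> borel \<Otimes>\<^sub>M borel \<rightarrow>\<^sub>M borel"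
    unfolding borel_prod by (rule borel_measurable_continuous_onI[OF continuous_on_zo_step])
  have V: "(\<lambda>s. ennreal (potential (fst s) (snd s))) \<in> borel_measurable borel"
    by (rule measurable_compose[OF borel_measurable_continuous_onI[OF continuous_on_potential] measurable_ennreal])
  have cont_G: "continuous_on UNIV (\<lambda>s::(real^'n) \<times> (real^'m). norm (grad \<Phi> (fst s)))"
    by (intro continuous_on_norm continuous_on_compose2[OF continuous_on_grad_Phi continuous_on_fst]
        continuous_on_id) auto
  have c: "(\<lambda>s::(real^'n) \<times> (real^'m). ennreal (\<alpha> * \<epsilon> * norm (grad \<Phi> (fst s)))) \<in> borel_measurable borel"
    by (rule measurable_compose[OF borel_measurable_continuous_onI[OF continuous_on_mult_left[OF cont_G]]
          measurable_ennreal])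
  have "(\<Sum>t<T. ennreal (\<alpha> * \<epsilon>) * (\<integral>\<^sup>+\<omega>. ennreal (norm (grad \<Phi> (fst (?X t \<omega>)))) \<partial>M))
      = (\<Sum>t<T. \<integral>\<^sup>+\<omega>. ennreal (\<alpha> * \<epsilon> * norm (grad \<Phi> (fst (?X t \<omega>)))) \<partial>M)"
  proof (intro sum.cong refl)
    fix t
    have "(\<lambda>\<omega>. ?X t \<omega>) \<in> M \<rightarrow>\<^sub>M borel"
      using F by (rule measurable_driven_orbit_random) (use indep in \<open>auto simp: indep_vars_def\<close>)
    from measurable_compose[OF measurable_compose[OF this borel_measurable_continuous_onI[OF cont_G]]
        measurable_ennreal]
    show "ennreal (\<alpha> * \<epsilon>) * (\<integral>\<^sup>+\<omega>. ennreal (norm (grad \<Phi> (fst (?X t \<omega>)))) \<partial>M)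
        = (\<integral>\<^sup>+\<omega>. ennreal (\<alpha> * \<epsilon> * norm (grad \<Phi> (fst (?X t \<omega>)))) \<partial>M)"
      using alpha_pos eps_pos by (simp add: ennreal_mult nn_integral_cmult)
  qed
  also have "\<dots> \<le> (\<integral>\<^sup>+\<omega>. ennreal (potential (fst (?X T \<omega>)) (snd (?X T \<omega>))) \<partial>M)
      + (\<Sum>t<T. \<integral>\<^sup>+\<omega>. ennreal (\<alpha> * \<epsilon> * norm (grad \<Phi> (fst (?X t \<omega>)))) \<partial>M)"
    by simp
  also have "\<dots> \<le> ennreal (potential x0 y0) + of_nat T * ennreal (7/8 * \<alpha> * \<epsilon>\<^sup>2)"
    using driven_orbit_expected_descent[OF indep distr_uv[rule_format] F V c one_step_descent,
        where init = "(x0, y0)" and T = T]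
    by simp
  also have "\<dots> = ennreal (potential x0 y0 + real T * (7/8 * \<alpha> * \<epsilon>\<^sup>2))"
  proof -
    have "ennreal a + of_nat T * ennreal b = ennreal (a + real T * b)" if "0 \<le> a" "0 \<le> b" for a b :: real
      using that by (simp add: ennreal_plus ennreal_mult ennreal_of_nat_eq_real_of_nat)
    then show ?thesis
      using potential_nonneg[of x0 y0] alpha_pos by simp
  qed
  finally show ?thesis
    unfolding zo_agda_eq_driven_orbit .
qed

lemma iteration_count_bound:
  fixes M :: "'w measure" and u :: "nat \<Rightarrow> 'w \<Rightarrow> real^'n" and v :: "nat \<Rightarrow> 'w \<Rightarrow> real^'m"
  assumes M: "prob_space M"
    and indep: "prob_space.indep_vars M (\<lambda>_. borel) (\<lambda>t \<omega>. (u t \<omega>, v t \<omega>)) UNIV"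
    and distr_uv: "\<forall>t. distr M borel (\<lambda>\<omega>. (u t \<omega>, v t \<omega>)) = uniform_sphere \<Otimes>\<^sub>M uniform_sphere"
    and not_stationary: "\<forall>t<T. \<not> (\<integral>\<^sup>+\<omega>. ennreal (norm (grad \<Phi>
        (fst (zo_agda f \<alpha> \<beta> \<mu>1 \<mu>2 x0 y0 (\<lambda>s. u s \<omega>) (\<lambda>s. v s \<omega>) t)))) \<partial>M) \<le> ennreal \<epsilon>"
  shows "real T \<le> 8 * potential x0 y0 / (\<alpha> * \<epsilon>\<^sup>2)"
proof -
  have "ennreal (real T * (\<alpha> * \<epsilon>\<^sup>2)) = (\<Sum>t<T. ennreal (\<alpha> * \<epsilon>) * ennreal \<epsilon>)"
    using alpha_pos eps_pos
    by (simp add: ennreal_mult[symmetric] ennreal_of_nat_eq_real_of_nat power2_eq_square mult_ac)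
  also have "\<dots> \<le> (\<Sum>t<T. ennreal (\<alpha> * \<epsilon>) * (\<integral>\<^sup>+\<omega>. ennreal (norm (grad \<Phi>
      (fst (zo_agda f \<alpha> \<beta> \<mu>1 \<mu>2 x0 y0 (\<lambda>s. u s \<omega>) (\<lambda>s. v s \<omega>) t)))) \<partial>M))"
    using not_stationary by (intro sum_mono mult_left_mono) auto
  also have "\<dots> \<le> ennreal (potential x0 y0 + real T * (7/8 * \<alpha> * \<epsilon>\<^sup>2))"
    by (rule expected_gradient_norm_sum_le[OF M indep distr_uv])
  finally have "real T * (\<alpha> * \<epsilon>\<^sup>2) \<le> potential x0 y0 + real T * (7/8 * \<alpha> * \<epsilon>\<^sup>2)"
    using alpha_pos potential_nonneg[of x0 y0] by (subst (asm) ennreal_le_iff) auto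
  then have "real T * (\<alpha> * \<epsilon>\<^sup>2) \<le> 8 * potential x0 y0" by simp
  moreover have "0 < \<alpha> * \<epsilon>\<^sup>2" using alpha_pos eps_pos by simp
  ultimately show ?thesis by (simp add: le_divide_eq)
qed

end

lemma smoothing_radii_bounds:
  fixes n m L \<alpha> \<beta> \<epsilon> \<theta>1 \<mu>1 \<mu>2 :: real
  assumes pos: "0 < n" "0 < m" "0 < L" "0 < \<alpha>" "0 < \<beta>" "0 < \<epsilon>"
    and \<theta>1: "\<theta>1 = (5 * n * L + 3 / (2 * \<alpha>) + 3 / 2 * L + m * L) * n\<^sup>2 * L\<^sup>2 * \<alpha>\<^sup>2"
    and \<mu>1: "\<mu>1 = sqrt \<alpha> * \<epsilon> / (2 * sqrt \<theta>1)"
    and \<mu>2: "\<mu>2 = sqrt \<alpha> * \<epsilon> / (sqrt (3 * \<beta>) * m * L)"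
  shows "0 < \<mu>1" "0 < \<mu>2" "n\<^sup>2 * L\<^sup>2 * \<mu>1\<^sup>2 \<le> \<epsilon>\<^sup>2 / 6" "\<beta> * m\<^sup>2 * L\<^sup>2 * \<mu>2\<^sup>2 \<le> \<alpha> * \<epsilon>\<^sup>2 / 3"
proof -
  \<comment> \<open>only the summand \<open>3 / (2 \<alpha>)\<close> of \<open>\<theta>1\<close> is needed\<close>
  have "3 / 2 * n\<^sup>2 * L\<^sup>2 * \<alpha> = 3 / (2 * \<alpha>) * n\<^sup>2 * L\<^sup>2 * \<alpha>\<^sup>2"
    using pos by (simp add: power2_eq_square field_simps)
  also have "\<dots> \<le> \<theta>1"
    unfolding \<theta>1 using pos by (intro mult_right_mono) auto
  finally have \<theta>1_ge: "3 / 2 * n\<^sup>2 * L\<^sup>2 * \<alpha> \<le> \<theta>1" .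
  moreover have "0 < 3 / 2 * n\<^sup>2 * L\<^sup>2 * \<alpha>" using pos by simp
  ultimately have "0 < \<theta>1" by linarith
  then show "0 < \<mu>1" "0 < \<mu>2"
    unfolding \<mu>1 \<mu>2 using pos by simp_all
  have "n\<^sup>2 * L\<^sup>2 * \<mu>1\<^sup>2 = (n\<^sup>2 * L\<^sup>2 * \<alpha>) * \<epsilon>\<^sup>2 / (4 * \<theta>1)"
    unfolding \<mu>1 using pos \<open>0 < \<theta>1\<close> by (simp add: power_divide power_mult_distrib)
  also have "\<dots> \<le> (2 / 3 * \<theta>1) * \<epsilon>\<^sup>2 / (4 * \<theta>1)"
    using \<theta>1_ge \<open>0 < \<theta>1\<close> by (intro divide_right_mono mult_right_mono) auto
  also have "\<dots> = \<epsilon>\<^sup>2 / 6" using \<open>0 < \<theta>1\<close> by simp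
  finally show "n\<^sup>2 * L\<^sup>2 * \<mu>1\<^sup>2 \<le> \<epsilon>\<^sup>2 / 6" .
  have "\<mu>2\<^sup>2 = \<alpha> * \<epsilon>\<^sup>2 / (3 * \<beta> * m\<^sup>2 * L\<^sup>2)"
    unfolding \<mu>2 using pos by (simp add: power_divide power_mult_distrib)
  then show "\<beta> * m\<^sup>2 * L\<^sup>2 * \<mu>2\<^sup>2 \<le> \<alpha> * \<epsilon>\<^sup>2 / 3"
    using pos by (simp add: field_simps)
qed

theorem theorem1:
  fixes f :: "real^'n \<Rightarrow> real^'m \<Rightarrow> real"
    and M :: "'w measure"
    and u :: "nat \<Rightarrow> 'w \<Rightarrow> real^'n"
    and v :: "nat \<Rightarrow> 'w \<Rightarrow> real^'m"
    and \<mu> l \<epsilon> \<alpha> \<beta> \<kappa> L \<theta>1 \<mu>1 \<mu>2 :: real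
    and x0 :: "real^'n" and y0 :: "real^'m"
    and E :: "nat \<Rightarrow> ennreal"
  assumes M: "prob_space M"
    and indep: "prob_space.indep_vars M (\<lambda>_. borel) (\<lambda>t \<omega>. (u t \<omega>, v t \<omega>)) UNIV"
    and distr_uv: "\<forall>t. distr M borel (\<lambda>\<omega>. (u t \<omega>, v t \<omega>)) = uniform_sphere \<Otimes>\<^sub>M uniform_sphere"
    and dx: "\<forall>x y. (\<lambda>x'. f x' y) differentiable (at x)"
    and dy: "\<forall>x y. (f x) differentiable (at y)"
    and max_attained: "\<forall>x. \<exists>y. \<forall>y'. f x y' \<le> f x y"
    and mu_pos: "0 < \<mu>"
    and PL: "\<forall>x y. (norm (grad (f x) y))\<^sup>2 \<ge> 2 * \<mu> * (Phi f x - f x y)"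
    and l_pos: "0 < l"
    and lip_x: "\<forall>x1 x2 y1 y2. norm (grad (\<lambda>x. f x y1) x1 - grad (\<lambda>x. f x y2) x2)
                   \<le> l * (norm (x1 - x2) + norm (y1 - y2))"
    and lip_y: "\<forall>x1 x2 y1 y2. norm (grad (f x1) y1 - grad (f x2) y2)
                   \<le> l * (norm (x1 - x2) + norm (y1 - y2))"
    and min_exists: "\<exists>xs. \<forall>x. Phi f xs \<le> Phi f x"
    and kappa_def: "\<kappa> = l / \<mu>"
    and L_def: "L = l + l\<^sup>2 / (2 * \<mu>)"
    and eps_pos: "0 < \<epsilon>"
    and beta_pos: "0 < \<beta>"
    and beta_le: "\<beta> \<le> 1 / (4 * real CARD('m) * L)"
    and alpha_pos: "0 < \<alpha>"
    and alpha_le: "\<alpha> \<le> min (\<beta> / (32 * \<kappa>\<^sup>2)) (1 / (10 * real CARD('n) * L))"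
    and theta1_def: "\<theta>1 = (5 * real CARD('n) * L + 3 / (2 * \<alpha>) + 3 / 2 * L + real CARD('m) * L)
                          * (real CARD('n))\<^sup>2 * L\<^sup>2 * \<alpha>\<^sup>2"
    and mu1_def: "\<mu>1 = sqrt \<alpha> * \<epsilon> / (2 * sqrt \<theta>1)"
    and mu2_def: "\<mu>2 = sqrt \<alpha> * \<epsilon> / (sqrt (3 * \<beta>) * real CARD('m) * L)"
    and E_def: "E = (\<lambda>t. \<integral>\<^sup>+ \<omega>. ennreal (norm (grad (Phi f)
                   (fst (zo_agda f \<alpha> \<beta> \<mu>1 \<mu>2 x0 y0 (\<lambda>s. u s \<omega>) (\<lambda>s. v s \<omega>) t)))) \<partial>M)"
  shows "(\<exists>t. E t \<le> ennreal \<epsilon>) \<and>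
         real (LEAST t. E t \<le> ennreal \<epsilon>)
           \<le> 4 * (3 * Phi f x0 - f x0 y0 - 2 * (INF x. Phi f x)) / (\<alpha> * \<epsilon>\<^sup>2)"
proof -
  obtain xs where "\<forall>x. Phi f xs \<le> Phi f x" using min_exists by blast
  then have "(INF x. Phi f x) = Phi f xs" by (intro cInf_eq_minimum) auto
  with \<open>\<forall>x. Phi f xs \<le> Phi f x\<close> have Pstar_le: "\<forall>x. (INF x. Phi f x) \<le> Phi f x" by simp
  have "0 < L" unfolding L_def using l_pos mu_pos by (simp add: add_pos_nonneg)
  note radii = smoothing_radii_bounds[OF _ _ \<open>0 < L\<close> alpha_pos beta_pos eps_pos theta1_def mu1_def mu2_def]
  interpret zo_agda_setting f \<mu> l \<alpha> \<beta> \<mu>1 \<mu>2 \<epsilon> "INF x. Phi f x" L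
    using dx dy max_attained mu_pos PL l_pos lip_x lip_y L_def alpha_pos beta_pos eps_pos Pstar_le
      beta_le alpha_le[unfolded kappa_def] radii
    by (intro zo_agda_setting.intro pl_minimax.intro zo_agda_setting_axioms.intro) simp_all
  have "8 * potential x0 y0 = 4 * (3 * Phi f x0 - f x0 y0 - 2 * (INF x. Phi f x))"
    unfolding potential_def by (simp add: field_simps)
  moreover have "real T \<le> 8 * potential x0 y0 / (\<alpha> * \<epsilon>\<^sup>2)" if "\<forall>t<T. \<not> E t \<le> ennreal \<epsilon>" for T
    using that unfolding E_def by (intro iteration_count_bound[OF M indep distr_uv]) simp
  ultimately show ?thesis
    by (intro first_hitting_time_bound) simp
qed

end
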